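(* Let $\alpha$ be a nonprincipal ultrafilter on $\mathbb{N}$ and let $(G_n, \mathcal{B}^{(n)}, \mu^{(n)}, \mathcal{B}_2^{(n)}, \mu_2^{(n)})_{n \in \mathbb{N}}$ be a sequence of probability groups. Let $G = \prod_{n \to \alpha} G_n$ be the ultraproduct group. Let $\mathcal{B}$ be the $\sigma$-algebra on $G$ generated by the internal sets $\prod_{n\to\alpha} A_n$ with $A_n \in \mathcal{B}^{(n)}$, and let $\mathcal{B}_2$ be the $\sigma$-algebra on $G^2$ generated by the internal sets $\prod_{n\to\alpha} C_n$ with $C_n \in \mathcal{B}_2^{(n)}$ (identifying $G^2$ with $\prod_{n\to\alpha} G_n^2$). Let $\mu$ and $\mu_2$ be the Loeb measures on $\mathcal{B}$ and $\mathcal{B}_2$ induced by the finitely additive set functions $\prod_{n\to\alpha} A_n \mapsto \lim_{n\to\alpha}\mu^{(n)}(A_n)$ and $\prod_{n\to\alpha} C_n \mapsto \lim_{n\to\alpha}\mu_2^{(n)}(C_n)$. Then $(G, \mathcal{B}, \mu, \mathcal{B}_2, \mu_2)$ is a probability group.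
   Context: A probability group is a tuple $(G, \mathcal{B}, \mu, \mathcal{B}_2, \mu_2)$ where $G$ is a group, $\mathcal{B}$ and $\mathcal{B}_2$ are $\sigma$-algebras on $G$ and $G^2$ respectively with $\mathcal{B}_2 \supseteq \mathcal{B}\times\mathcal{B}$ (the product $\sigma$-algebra), $\mu,\mu_2$ are probability measures on $\mathcal{B},\mathcal{B}_2$ with $\mu_2|_{\mathcal{B}\times\mathcal{B}} = \mu\times\mu$, such that: (i) multiplication $(G^2,\mathcal{B}_2)\to(G,\mathcal{B})$ is measurable; (ii) inversion $(G,\mathcal{B})\to(G,\mathcal{B})$ is measurable; (iii) $\mu$ is invariant under left translations, right translations and inversion; (iv) Fubini's theorem holds for every $\mathcal{B}_2$-measurable $f:G^2\to\mathbb{R}$, i.e. (a) for every $g\in G$ the functions $f(g,\cdot)$ and $f(\cdot,g)$ are $\mathcal{B}$-measurable, (b) the functions $g\mapsto\int_G f(g,h)\,d\mu(h)$ and $g\mapsto \int_G f(h,g)\,d\mu(h)$ are $\mathcal{B}$-measurable, and (c) $\int_G\int_G f(g,h)\,d\mu(g)\,d\mu(h) = \int_{G^2} f\,d\mu_2 = \int_G\int_G f(g,h)\,d\mu(h)\,d\mu(g)$. The Loeb measure is the Carathéodory extension of the indicated finitely additive set function on the algebra of internal sets to the generated $\sigma$-algebra.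
   Formalization: Clause (iv) of the probability-group definition, both for each $G_n$ and for the ultraproduct, covers only bounded $\mathcal{B}_2$-measurable $f:G^2\to\mathbb{R}$, and all the groups $G_n$ share one common underlying type of elements. Apart from conventions, each condition added here is assumed in the paper as well or is needed for the statement above to hold. *)

theory Defs
  imports "HOL-Probability.Probability" "HOL-Algebra.Group"
begin

definition meas_pres :: "'a measure \<Rightarrow> 'b measure \<Rightarrow> ('a \<Rightarrow> 'b) \<Rightarrow> bool" where
  "meas_pres M N f \<longleftrightarrow> f \<in> M \<rightarrow>\<^sub>M N \<and>
     (\<forall>A\<in>sets N. emeasure M (f -` A \<inter> space M) = emeasure N A)"

definition fubini_prop :: "'a measure \<Rightarrow> ('a \<times> 'a) measure \<Rightarrow> bool" where
  "fubini_prop M M2 \<longleftrightarrow>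
    (\<forall>f :: 'a \<times> 'a \<Rightarrow> real. f \<in> borel_measurable M2 \<and> (\<exists>B. \<forall>z\<in>space M2. \<bar>f z\<bar> \<le> B) \<longrightarrow>
       (\<forall>g\<in>space M. (\<lambda>h. f (g, h)) \<in> borel_measurable M \<and> (\<lambda>h. f (h, g)) \<in> borel_measurable M) \<and>
       (\<lambda>g. \<integral>h. f (g, h) \<partial>M) \<in> borel_measurable M \<and>
       (\<lambda>g. \<integral>h. f (h, g) \<partial>M) \<in> borel_measurable M \<and>
       (\<integral>h. (\<integral>g. f (g, h) \<partial>M) \<partial>M) = (\<integral>z. f z \<partial>M2) \<and>
       (\<integral>g. (\<integral>h. f (g, h) \<partial>M) \<partial>M) = (\<integral>z. f z \<partial>M2))"

definition prob_group :: "('g, 'b) monoid_scheme \<Rightarrow> 'g measure \<Rightarrow> ('g \<times> 'g) measure \<Rightarrow> bool" where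
  "prob_group G M M2 \<longleftrightarrow>
     group G \<and>
     space M = carrier G \<and> space M2 = carrier G \<times> carrier G \<and>
     prob_space M \<and> prob_space M2 \<and>
     sets (M \<Otimes>\<^sub>M M) \<subseteq> sets M2 \<and>
     (\<forall>A\<in>sets (M \<Otimes>\<^sub>M M). emeasure M2 A = emeasure (M \<Otimes>\<^sub>M M) A) \<and>
     (\<lambda>(x, y). x \<otimes>\<^bsub>G\<^esub> y) \<in> M2 \<rightarrow>\<^sub>M M \<and>
     (\<lambda>x. inv\<^bsub>G\<^esub> x) \<in> M \<rightarrow>\<^sub>M M \<and>
     (\<forall>g\<in>carrier G. meas_pres M M (\<lambda>x. g \<otimes>\<^bsub>G\<^esub> x) \<and> meas_pres M M (\<lambda>x. x \<otimes>\<^bsub>G\<^esub> g)) \<and>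
     meas_pres M M (\<lambda>x. inv\<^bsub>G\<^esub> x) \<and>
     fubini_prop M M2"

definition nonprincipal_ultrafilter :: "nat filter \<Rightarrow> bool" where
  "nonprincipal_ultrafilter \<alpha> \<longleftrightarrow>
     \<alpha> \<noteq> bot \<and>
     (\<forall>P. eventually P \<alpha> \<or> eventually (\<lambda>n. \<not> P n) \<alpha>) \<and>
     (\<forall>m. eventually (\<lambda>n. n \<noteq> m) \<alpha>)"

definition useqs :: "(nat \<Rightarrow> ('a, 'b) monoid_scheme) \<Rightarrow> (nat \<Rightarrow> 'a) set" where
  "useqs G = {x. \<forall>n. x n \<in> carrier (G n)}"

definition urel :: "nat filter \<Rightarrow> (nat \<Rightarrow> ('a, 'b) monoid_scheme) \<Rightarrow> ((nat \<Rightarrow> 'a) \<times> (nat \<Rightarrow> 'a)) set" where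
  "urel \<alpha> G = {(x, y). x \<in> useqs G \<and> y \<in> useqs G \<and> eventually (\<lambda>n. x n = y n) \<alpha>}"

definition uclass :: "nat filter \<Rightarrow> (nat \<Rightarrow> ('a, 'b) monoid_scheme) \<Rightarrow> (nat \<Rightarrow> 'a) \<Rightarrow> (nat \<Rightarrow> 'a) set" where
  "uclass \<alpha> G x = urel \<alpha> G `` {x}"

definition ultraprod_group :: "nat filter \<Rightarrow> (nat \<Rightarrow> ('a, 'b) monoid_scheme) \<Rightarrow> ((nat \<Rightarrow> 'a) set) monoid" where
  "ultraprod_group \<alpha> G =
     \<lparr> carrier = useqs G // urel \<alpha> G,
       mult = (\<lambda>X Y. uclass \<alpha> G (\<lambda>n. (SOME x. x \<in> X) n \<otimes>\<^bsub>G n\<^esub> (SOME y. y \<in> Y) n)),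
       one = uclass \<alpha> G (\<lambda>n. \<one>\<^bsub>G n\<^esub>) \<rparr>"

definition internal1 :: "nat filter \<Rightarrow> (nat \<Rightarrow> ('a, 'b) monoid_scheme) \<Rightarrow> (nat \<Rightarrow> 'a set) \<Rightarrow> (nat \<Rightarrow> 'a) set set" where
  "internal1 \<alpha> G A = {X \<in> useqs G // urel \<alpha> G. \<exists>x\<in>X. eventually (\<lambda>n. x n \<in> A n) \<alpha>}"

definition internal2 :: "nat filter \<Rightarrow> (nat \<Rightarrow> ('a, 'b) monoid_scheme) \<Rightarrow> (nat \<Rightarrow> ('a \<times> 'a) set)
     \<Rightarrow> ((nat \<Rightarrow> 'a) set \<times> (nat \<Rightarrow> 'a) set) set" where
  "internal2 \<alpha> G C = {(X, Y). X \<in> useqs G // urel \<alpha> G \<and> Y \<in> useqs G // urel \<alpha> G \<and>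
      (\<exists>x\<in>X. \<exists>y\<in>Y. eventually (\<lambda>n. (x n, y n) \<in> C n) \<alpha>)}"

text \<open>Caratheodory outer measure induced by the set function v on the internal sets I ` P
  (internal sets are indexed by their defining sequences, P is the admissible index set).\<close>
definition loeb_outer :: "'c set \<Rightarrow> ('i \<Rightarrow> 'c set) \<Rightarrow> ('i \<Rightarrow> ennreal) \<Rightarrow> 'i set \<Rightarrow> 'c set \<Rightarrow> ennreal" where
  "loeb_outer \<Omega> I v P X =
     (INF A \<in> {A :: nat \<Rightarrow> 'i. range A \<subseteq> P \<and> X \<subseteq> (\<Union>i. I (A i))}. \<Sum>i. v (A i))"

definition loeb_measure :: "'c set \<Rightarrow> ('i \<Rightarrow> 'c set) \<Rightarrow> ('i \<Rightarrow> ennreal) \<Rightarrow> 'i set \<Rightarrow> 'c measure" where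
  "loeb_measure \<Omega> I v P = measure_of \<Omega> (I ` P) (loeb_outer \<Omega> I v P)"

definition ultra_measure :: "nat filter \<Rightarrow> (nat \<Rightarrow> ('a, 'b) monoid_scheme) \<Rightarrow> (nat \<Rightarrow> 'a measure)
     \<Rightarrow> (nat \<Rightarrow> 'a) set measure" where
  "ultra_measure \<alpha> G M =
     loeb_measure (useqs G // urel \<alpha> G) (internal1 \<alpha> G)
       (\<lambda>A. ennreal (Lim \<alpha> (\<lambda>n. measure (M n) (A n))))
       {A. \<forall>n. A n \<in> sets (M n)}"

definition ultra_measure2 :: "nat filter \<Rightarrow> (nat \<Rightarrow> ('a, 'b) monoid_scheme) \<Rightarrow> (nat \<Rightarrow> ('a \<times> 'a) measure)
     \<Rightarrow> ((nat \<Rightarrow> 'a) set \<times> (nat \<Rightarrow> 'a) set) measure" where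
  "ultra_measure2 \<alpha> G M2 =
     loeb_measure ((useqs G // urel \<alpha> G) \<times> (useqs G // urel \<alpha> G)) (internal2 \<alpha> G)
       (\<lambda>C. ennreal (Lim \<alpha> (\<lambda>n. measure (M2 n) (C n))))
       {C. \<forall>n. C n \<in> sets (M2 n)}"

end

theory Submission
  imports Defs
begin

text \<open>
  On the algebra of internal sets the ultralimit
  of the factor measures is finitely additive, and countable saturation (a decreasing sequence of
  nonempty internal sets has nonempty intersection) makes it countably additive, so Caratheodory's
  construction applies.

  Multiplication, inversion and translations are induced by measurable, resp. measure preserving,
  maps of the factors, and therefore are measurable, resp. measure preserving, on the Loeb spaces.
  On rectangles of internal sets, which generate the product \<open>\<sigma>\<close>-algebra, the product of the Loeb
  measures agrees with the Loeb measure on \<open>U \<times> U\<close>.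

  For Fubini, the section kernel \<open>h \<mapsto> (\<lambda>g. (g, h))\<^sub>*\<mu>\<close> gives an internal set \<open>C\<close> the standard
  part of the internal function \<open>y \<mapsto> \<mu>\<^sub>n {x. (x, y) \<in> C n}\<close>. The Loeb integral of the standard
  part of a bounded internal function is the ultralimit of the integrals (squeeze it between the
  step functions \<open>\<lfloor>k \<phi>\<rfloor>/k\<close>), so Fubini in the factors shows that integrating the kernel against
  \<open>\<mu>\<close> gives back \<open>\<mu>\<^sub>2\<close>, and Fubini for bounded \<open>\<mu>\<^sub>2\<close>-measurable functions follows.
\<close>

section \<open>Ultralimits\<close>

lemma Bseq_unit_interval:
  fixes f :: "nat \<Rightarrow> real"
  shows "(\<And>n. 0 \<le> f n \<and> f n \<le> 1) \<Longrightarrow> Bseq f"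
  by (rule BseqI'[where K=1]) auto

locale nat_ultrafilter =
  fixes \<alpha> :: "nat filter"
  assumes nonprincipal: "nonprincipal_ultrafilter \<alpha>"
begin

lemma ultrafilter_ne_bot: "\<alpha> \<noteq> bot"
  using nonprincipal unfolding nonprincipal_ultrafilter_def by blast

lemma frequently_iff_eventually: "frequently P \<alpha> \<longleftrightarrow> eventually P \<alpha>"
  using nonprincipal eventually_frequently[OF ultrafilter_ne_bot]
  unfolding nonprincipal_ultrafilter_def frequently_def by blast

lemma eventually_not_iff: "eventually (\<lambda>n. \<not> P n) \<alpha> \<longleftrightarrow> \<not> eventually P \<alpha>"
  using frequently_iff_eventually[of "\<lambda>n. \<not> P n"] by (simp add: frequently_def)

lemma eventually_disj_iff: "eventually (\<lambda>n. P n \<or> Q n) \<alpha> \<longleftrightarrow> eventually P \<alpha> \<or> eventually Q \<alpha>"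
  using frequently_disj_iff[of P Q \<alpha>] by (simp only: frequently_iff_eventually)

lemma ultrafilter_le_sequentially: "\<alpha> \<le> sequentially"
proof (rule filter_leI)
  fix P assume "eventually P sequentially"
  then have "finite {n. \<not> P n}"
    by (simp add: cofinite_eq_sequentially[symmetric] eventually_cofinite)
  moreover have "\<forall>m. eventually (\<lambda>n. n \<noteq> m) \<alpha>"
    using nonprincipal unfolding nonprincipal_ultrafilter_def by blast
  ultimately have "eventually (\<lambda>n. \<forall>m\<in>{n. \<not> P n}. n \<noteq> m) \<alpha>"
    by (intro eventually_ball_finite) auto
  then show "eventually P \<alpha>" by (rule eventually_mono) blast
qed

lemma Lim_ultrafilter_eqI: "(f \<longlongrightarrow> L) \<alpha> \<Longrightarrow> Lim \<alpha> f = L"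
  using tendsto_Lim ultrafilter_ne_bot by (simp add: trivial_limit_def)

text \<open>The limit is the supremum of the reals that the sequence eventually exceeds.\<close>
lemma tendsto_Lim_ultrafilter:
  fixes f :: "nat \<Rightarrow> real"
  assumes "Bseq f"
  shows "(f \<longlongrightarrow> Lim \<alpha> f) \<alpha>"
proof -
  obtain B where B: "\<And>n. \<bar>f n\<bar> \<le> B" using assms unfolding Bseq_def by auto
  define S where "S = {t. eventually (\<lambda>n. t \<le> f n) \<alpha>}"
  have "-B \<in> S" using B unfolding S_def by (auto intro!: always_eventually simp: abs_le_iff minus_le_iff)
  have S_le: "t \<le> B" if "t \<in> S" for t
  proof (rule ccontr)
    assume "\<not> t \<le> B"
    then have "\<not> t \<le> f n" for n using B by (meson abs_ge_self order_trans)
    with that have "eventually (\<lambda>n. False) \<alpha>" unfolding S_def by (auto elim!: eventually_mono)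
    with ultrafilter_ne_bot show False by (simp add: eventually_False)
  qed
  have "S \<noteq> {}" "bdd_above S" using \<open>-B \<in> S\<close> S_le by (auto intro: bdd_aboveI[where M=B])
  have "(f \<longlongrightarrow> Sup S) \<alpha>"
  proof (rule order_tendstoI)
    fix y assume "y < Sup S"
    then obtain t where "t \<in> S" "y < t" using less_cSup_iff[OF \<open>S \<noteq> {}\<close> \<open>bdd_above S\<close>] by auto
    then show "eventually (\<lambda>n. y < f n) \<alpha>" unfolding S_def by (auto elim: eventually_mono)
  next
    fix y assume "Sup S < y"
    then have "y \<notin> S" using cSup_upper[OF _ \<open>bdd_above S\<close>] by force
    then show "eventually (\<lambda>n. f n < y) \<alpha>"
      using eventually_not_iff[of "\<lambda>n. y \<le> f n"] unfolding S_def by (simp add: not_le)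
  qed
  then show ?thesis by (simp add: Lim_ultrafilter_eqI)
qed

lemma Lim_const: "Lim \<alpha> (\<lambda>n. c) = c"
  by (intro Lim_ultrafilter_eqI tendsto_const)

lemma Lim_add:
  fixes f g :: "nat \<Rightarrow> real"
  shows "Bseq f \<Longrightarrow> Bseq g \<Longrightarrow> Lim \<alpha> (\<lambda>n. f n + g n) = Lim \<alpha> f + Lim \<alpha> g"
  by (intro Lim_ultrafilter_eqI tendsto_add tendsto_Lim_ultrafilter)

lemma Lim_mult:
  fixes f g :: "nat \<Rightarrow> real"
  shows "Bseq f \<Longrightarrow> Bseq g \<Longrightarrow> Lim \<alpha> (\<lambda>n. f n * g n) = Lim \<alpha> f * Lim \<alpha> g"
  by (intro Lim_ultrafilter_eqI tendsto_mult tendsto_Lim_ultrafilter)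

lemma Lim_sum:
  fixes f :: "'i \<Rightarrow> nat \<Rightarrow> real"
  shows "(\<And>j. j \<in> S \<Longrightarrow> Bseq (f j)) \<Longrightarrow> Lim \<alpha> (\<lambda>n. \<Sum>j\<in>S. f j n) = (\<Sum>j\<in>S. Lim \<alpha> (f j))"
  by (intro Lim_ultrafilter_eqI tendsto_sum tendsto_Lim_ultrafilter) auto

lemma Lim_cong:
  fixes f g :: "nat \<Rightarrow> real"
  shows "Bseq f \<Longrightarrow> eventually (\<lambda>n. f n = g n) \<alpha> \<Longrightarrow> Lim \<alpha> f = Lim \<alpha> g"
  using tendsto_cong tendsto_Lim_ultrafilter Lim_ultrafilter_eqI by metis

lemma Lim_mono:
  fixes f g :: "nat \<Rightarrow> real"
  shows "Bseq f \<Longrightarrow> Bseq g \<Longrightarrow> eventually (\<lambda>n. f n \<le> g n) \<alpha> \<Longrightarrow> Lim \<alpha> f \<le> Lim \<alpha> g"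
  by (rule tendsto_le[OF ultrafilter_ne_bot tendsto_Lim_ultrafilter tendsto_Lim_ultrafilter])

lemma Lim_eventually_less:
  fixes f :: "nat \<Rightarrow> real"
  shows "Bseq f \<Longrightarrow> c < Lim \<alpha> f \<Longrightarrow> eventually (\<lambda>n. c < f n) \<alpha>"
  using order_tendstoD(1)[OF tendsto_Lim_ultrafilter] by blast

end

section \<open>Loeb measures\<close>

lemma (in ring_of_sets) measure_space_outer_measure:
  assumes "positive M f" "countably_additive M f"
  shows "measure_space \<Omega> (sigma_sets \<Omega> M) (outer_measure M f)"
proof -
  have inc: "increasing M f"
    using assms additive_increasing countably_additive_additive by blast
  let ?ls = "lambda_system \<Omega> (Pow \<Omega>) (outer_measure M f)"
  have "measure_space \<Omega> ?ls (outer_measure M f)"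
    using sigma_algebra.caratheodory_lemma[OF sigma_algebra_Pow outer_measure_space_outer_measure]
      assms(1) inc by simp
  moreover have "sigma_sets \<Omega> M \<subseteq> ?ls"
    using sigma_algebra.sigma_sets_subset[OF calculation[unfolded measure_space_def, THEN conjunct1]]
      algebra_subset_lambda_system[OF assms(1) inc countably_additive_additive[OF assms]] by blast
  ultimately show ?thesis
    using measure_down sigma_algebra_sigma_sets space_closed by blast
qed

lemma floor_eq_sum_indicator:
  fixes t :: real
  assumes "0 \<le> t" "t < real k + 1"
  shows "of_int \<lfloor>t\<rfloor> = (\<Sum>j\<le>k. real j * indicator {real j..<real j + 1} t)"
proof -
  have "t \<in> {real j..<real j + 1} \<longleftrightarrow> \<lfloor>t\<rfloor> = int j" for j
    by (auto simp: floor_eq_iff)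
  also have "\<dots> j \<longleftrightarrow> j = nat \<lfloor>t\<rfloor>" for j
    using assms(1) by auto
  finally have "t \<in> {real j..<real j + 1} \<longleftrightarrow> j = nat \<lfloor>t\<rfloor>" for j .
  moreover have "nat \<lfloor>t\<rfloor> \<le> k" using assms by linarith
  ultimately show ?thesis using assms(1) by (simp add: indicator_def)
qed

text \<open>An abstract ultraproduct of probability spaces: \<open>\<Omega>\<close> is the ultraproduct of the spaces
  \<open>N n\<close>, \<open>r \<omega>\<close> is a representative sequence of \<open>\<omega>\<close>, and \<open>I A\<close> is the internal set
  \<open>\<Prod>\<^sub>n\<^sub>\<rightarrow>\<^sub>\<alpha> A n\<close>.\<close>
locale loeb_space = nat_ultrafilter +
  fixes \<Omega> :: "'c set" and r :: "'c \<Rightarrow> nat \<Rightarrow> 'x" and N :: "nat \<Rightarrow> 'x measure"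
    and I :: "(nat \<Rightarrow> 'x set) \<Rightarrow> 'c set"
  assumes internal_eq: "\<And>A. I A = {\<omega>\<in>\<Omega>. eventually (\<lambda>n. r \<omega> n \<in> A n) \<alpha>}"
    and rep_in_space: "\<And>\<omega> n. \<omega> \<in> \<Omega> \<Longrightarrow> r \<omega> n \<in> space (N n)"
    and rep_surj: "\<And>x. (\<And>n. x n \<in> space (N n)) \<Longrightarrow> \<exists>\<omega>\<in>\<Omega>. eventually (\<lambda>n. r \<omega> n = x n) \<alpha>"
    and prob_space_N: "\<And>n. prob_space (N n)"
begin

definition meas_seqs :: "(nat \<Rightarrow> 'x set) set" where
  "meas_seqs = {A. \<forall>n. A n \<in> sets (N n)}"

definition lim_measure :: "(nat \<Rightarrow> 'x set) \<Rightarrow> ennreal" where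
  "lim_measure A = ennreal (Lim \<alpha> (\<lambda>n. measure (N n) (A n)))"

definition internal_sets :: "'c set set" where
  "internal_sets = I ` meas_seqs"

definition loeb :: "'c measure" where
  "loeb = loeb_measure \<Omega> I lim_measure meas_seqs"

lemma meas_seqsD: "A \<in> meas_seqs \<Longrightarrow> A n \<in> sets (N n)"
  unfolding meas_seqs_def by blast

lemma meas_seqs_subset_space: "A \<in> meas_seqs \<Longrightarrow> A n \<subseteq> space (N n)"
  using sets.sets_into_space[OF meas_seqsD] .

lemma Bseq_measure: "Bseq (\<lambda>n. measure (N n) (A n))"
  using prob_space.prob_le_1[OF prob_space_N] by (intro BseqI'[where K=1]) simp

lemma Lim_measure_nonneg: "0 \<le> Lim \<alpha> (\<lambda>n. measure (N n) (A n))"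
  using Lim_mono[OF Bfun_const Bseq_measure, of 0] by (simp add: Lim_const)

lemma internal_subset: "I A \<subseteq> \<Omega>"
  unfolding internal_eq by blast

lemma mem_internal: "\<omega> \<in> I A \<longleftrightarrow> \<omega> \<in> \<Omega> \<and> eventually (\<lambda>n. r \<omega> n \<in> A n) \<alpha>"
  unfolding internal_eq by blast

lemma internal_Int: "I (\<lambda>n. A n \<inter> B n) = I A \<inter> I B"
  unfolding internal_eq by (auto simp: eventually_conj_iff)

lemma internal_Un: "I (\<lambda>n. A n \<union> B n) = I A \<union> I B"
  unfolding internal_eq by (auto simp: eventually_disj_iff)

lemma internal_diff: "I (\<lambda>n. A n - B n) = I A - I B"
  unfolding internal_eq by (auto simp: eventually_conj_iff eventually_not_iff)

lemma internal_empty: "I (\<lambda>n. {}) = {}"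
  unfolding internal_eq using ultrafilter_ne_bot by (simp add: eventually_False)

lemma internal_space: "I (\<lambda>n. space (N n)) = \<Omega>"
  unfolding internal_eq using rep_in_space by auto

lemma internal_compl: "I (\<lambda>n. space (N n) - A n) = \<Omega> - I A"
  by (simp add: internal_diff internal_space)

lemma internal_INT_atMost:
  fixes A :: "nat \<Rightarrow> nat \<Rightarrow> 'x set"
  shows "I (\<lambda>n. \<Inter>i\<le>k. A i n) = (\<Inter>i\<le>k. I (A i))"
proof -
  have "eventually (\<lambda>n. \<forall>i\<in>{..k}. r \<omega> n \<in> A i n) \<alpha> \<longleftrightarrow> (\<forall>i\<in>{..k}. eventually (\<lambda>n. r \<omega> n \<in> A i n) \<alpha>)"
    for \<omega> by (rule eventually_ball_finite_distrib) simp
  then show ?thesis unfolding internal_eq by auto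
qed

lemma internal_nonempty_iff: "I A \<noteq> {} \<longleftrightarrow> eventually (\<lambda>n. A n \<inter> space (N n) \<noteq> {}) \<alpha>"
proof
  assume "I A \<noteq> {}"
  then obtain \<omega> where \<omega>: "\<omega> \<in> \<Omega>" "eventually (\<lambda>n. r \<omega> n \<in> A n) \<alpha>"
    unfolding internal_eq by blast
  from \<omega>(2) show "eventually (\<lambda>n. A n \<inter> space (N n) \<noteq> {}) \<alpha>"
    by (rule eventually_mono) (use rep_in_space[OF \<omega>(1)] in blast)
next
  assume ne: "eventually (\<lambda>n. A n \<inter> space (N n) \<noteq> {}) \<alpha>"
  define x where "x n = (SOME y. y \<in> space (N n) \<and> (A n \<inter> space (N n) \<noteq> {} \<longrightarrow> y \<in> A n))" for n
  have x: "x n \<in> space (N n) \<and> (A n \<inter> space (N n) \<noteq> {} \<longrightarrow> x n \<in> A n)" for n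
  proof -
    have "space (N n) \<noteq> {}" by (rule prob_space.not_empty[OF prob_space_N])
    then have "\<exists>y. y \<in> space (N n) \<and> (A n \<inter> space (N n) \<noteq> {} \<longrightarrow> y \<in> A n)" by blast
    then show ?thesis unfolding x_def by (rule someI_ex)
  qed
  then obtain \<omega> where \<omega>: "\<omega> \<in> \<Omega>" "eventually (\<lambda>n. r \<omega> n = x n) \<alpha>"
    using rep_surj[of x] by blast
  have "eventually (\<lambda>n. r \<omega> n \<in> A n) \<alpha>"
    using ne \<omega>(2) by eventually_elim (use x in simp)
  with \<omega>(1) show "I A \<noteq> {}" unfolding internal_eq by blast
qed

lemma internal_eq_imp_eventually_eq:
  assumes "A \<in> meas_seqs" "B \<in> meas_seqs" "I A = I B"
  shows "eventually (\<lambda>n. A n = B n) \<alpha>"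
proof -
  have "I (\<lambda>n. (A n - B n) \<union> (B n - A n)) = {}"
    using assms(3) by (simp add: internal_Un internal_diff)
  then have "eventually (\<lambda>n. ((A n - B n) \<union> (B n - A n)) \<inter> space (N n) = {}) \<alpha>"
    using internal_nonempty_iff[of "\<lambda>n. (A n - B n) \<union> (B n - A n)"]
      eventually_not_iff[of "\<lambda>n. ((A n - B n) \<union> (B n - A n)) \<inter> space (N n) \<noteq> {}"] by simp
  then show ?thesis
    by (rule eventually_mono) (use meas_seqs_subset_space[OF assms(1)] meas_seqs_subset_space[OF assms(2)] in blast)
qed

text \<open>The common point \<open>\<omega>\<close> is represented by points \<open>x n\<close> lying in as many of the first \<open>n\<close>
  sets \<open>A i n\<close> as possible.\<close>
lemma countable_saturation:
  fixes A :: "nat \<Rightarrow> nat \<Rightarrow> 'x set"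
  assumes ne: "\<And>k. (\<Inter>i\<le>k. I (A i)) \<noteq> {}"
  shows "(\<Inter>i. I (A i)) \<noteq> {}"
proof -
  define E where "E k n \<longleftrightarrow> k \<le> n \<and> (\<Inter>i\<le>k. A i n) \<inter> space (N n) \<noteq> {}" for k n
  have ev_E: "eventually (E k) \<alpha>" for k
    using eventually_conj[OF filter_leD[OF ultrafilter_le_sequentially eventually_ge_at_top[of k]]
        iffD1[OF internal_nonempty_iff ne[unfolded internal_INT_atMost[symmetric]]]]
    unfolding E_def .
  define km where "km n = (GREATEST k. E k n)" for n
  have E_le: "E k n \<Longrightarrow> k \<le> n" for k n by (simp add: E_def)
  have km: "E (km n) n \<and> k \<le> km n" if "E k n" for k n
    unfolding km_def using GreatestI_nat[of "\<lambda>k. E k n", OF that E_le] Greatest_le_nat[of "\<lambda>k. E k n", OF that E_le]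
    by blast
  define x where "x n = (SOME y. y \<in> space (N n) \<and> (E 0 n \<longrightarrow> (\<forall>i\<le>km n. y \<in> A i n)))" for n
  have x: "x n \<in> space (N n) \<and> (E 0 n \<longrightarrow> (\<forall>i\<le>km n. x n \<in> A i n))" for n
  proof -
    have "\<exists>y. y \<in> space (N n) \<and> (E 0 n \<longrightarrow> (\<forall>i\<le>km n. y \<in> A i n))"
    proof (cases "E 0 n")
      case True
      then have "(\<Inter>i\<le>km n. A i n) \<inter> space (N n) \<noteq> {}" using km[OF True] unfolding E_def by simp
      then show ?thesis by auto
    qed (use prob_space.not_empty[OF prob_space_N] in blast)
    then show ?thesis unfolding x_def by (rule someI_ex)
  qed
  obtain \<omega> where \<omega>: "\<omega> \<in> \<Omega>" "eventually (\<lambda>n. r \<omega> n = x n) \<alpha>"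
    using rep_surj[of x] x by blast
  have "\<omega> \<in> I (A i)" for i
  proof -
    have "eventually (\<lambda>n. r \<omega> n \<in> A i n) \<alpha>"
      using \<omega>(2) ev_E[of i]
    proof eventually_elim
      case (elim n)
      then have "E 0 n" unfolding E_def by auto
      with elim km[of i n] x[of n] show ?case by simp
    qed
    with \<omega>(1) show ?thesis by (simp add: mem_internal)
  qed
  then show ?thesis by auto
qed

lemma lim_measure_cong:
  assumes "A \<in> meas_seqs" "B \<in> meas_seqs" "I A = I B"
  shows "lim_measure A = lim_measure B"
proof -
  have "eventually (\<lambda>n. measure (N n) (A n) = measure (N n) (B n)) \<alpha>"
    using internal_eq_imp_eventually_eq[OF assms] by (rule eventually_mono) simp
  then show ?thesis unfolding lim_measure_def by (simp add: Lim_cong[OF Bseq_measure])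
qed

text \<open>By \<open>lim_measure_cong\<close>, the choice of the representing sequence does not matter.\<close>
definition premeasure :: "'c set \<Rightarrow> ennreal" where
  "premeasure S = lim_measure (SOME A. A \<in> meas_seqs \<and> I A = S)"

lemma premeasure_internal: "A \<in> meas_seqs \<Longrightarrow> premeasure (I A) = lim_measure A"
  unfolding premeasure_def by (rule someI2[of _ A]) (auto intro: lim_measure_cong)

lemma internal_setsI: "A \<in> meas_seqs \<Longrightarrow> I A \<in> internal_sets"
  unfolding internal_sets_def by blast

lemma internal_setsE:
  assumes "S \<in> internal_sets"
  obtains A where "A \<in> meas_seqs" "S = I A"
  using assms unfolding internal_sets_def by blast

lemma internal_sets_seqE:
  assumes "range S \<subseteq> internal_sets"
  obtains A where "\<And>i. A i \<in> meas_seqs" "\<And>i. S i = I (A i)"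
proof -
  have "\<forall>i. \<exists>A. A \<in> meas_seqs \<and> S i = I A" using assms unfolding internal_sets_def by blast
  then obtain A where "\<forall>i. A i \<in> meas_seqs \<and> S i = I (A i)" by metis
  then show ?thesis using that by blast
qed

lemma algebra_internal_sets: "algebra \<Omega> internal_sets"
  unfolding algebra_iff_Int
proof (intro conjI ballI)
  show "internal_sets \<subseteq> Pow \<Omega>"
    unfolding internal_sets_def using internal_subset by blast
  show "{} \<in> internal_sets"
    using internal_setsI[of "\<lambda>n. {}"] by (simp add: internal_empty meas_seqs_def)
  show "\<Omega> - S \<in> internal_sets" if "S \<in> internal_sets" for S
    using that by (elim internal_setsE)
      (simp add: internal_compl[symmetric] internal_setsI meas_seqs_def)
  show "S \<inter> T \<in> internal_sets" if "S \<in> internal_sets" "T \<in> internal_sets" for S T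
    using that by (elim internal_setsE)
      (simp add: internal_Int[symmetric] internal_setsI meas_seqs_def)
qed

sublocale internal: algebra \<Omega> internal_sets
  by (rule algebra_internal_sets)

lemma positive_premeasure: "positive internal_sets premeasure"
  using premeasure_internal[of "\<lambda>n. {}"]
  by (simp add: positive_def internal_empty meas_seqs_def lim_measure_def Lim_const)

lemma additive_premeasure: "additive internal_sets premeasure"
  unfolding additive_def
proof (intro ballI impI)
  fix S T assume "S \<in> internal_sets" "T \<in> internal_sets" and disj: "S \<inter> T = {}"
  then obtain A B where AB: "A \<in> meas_seqs" "S = I A" "B \<in> meas_seqs" "T = I B"
    by (auto elim!: internal_setsE)
  have "I (\<lambda>n. A n \<inter> B n) = {}" using disj AB by (simp add: internal_Int)
  then have "eventually (\<lambda>n. A n \<inter> B n \<inter> space (N n) = {}) \<alpha>"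
    using internal_nonempty_iff[of "\<lambda>n. A n \<inter> B n"] eventually_not_iff by simp
  then have "eventually (\<lambda>n. measure (N n) (A n \<union> B n) = measure (N n) (A n) + measure (N n) (B n)) \<alpha>"
  proof (rule eventually_mono)
    fix n assume "A n \<inter> B n \<inter> space (N n) = {}"
    then show "measure (N n) (A n \<union> B n) = measure (N n) (A n) + measure (N n) (B n)"
      using meas_seqs_subset_space[OF AB(1), of n] meas_seqsD[OF AB(1)] meas_seqsD[OF AB(3)]
      by (intro finite_measure.finite_measure_Union[OF prob_space.axioms(1)[OF prob_space_N]]) auto
  qed
  then have "Lim \<alpha> (\<lambda>n. measure (N n) (A n \<union> B n)) =
      Lim \<alpha> (\<lambda>n. measure (N n) (A n)) + Lim \<alpha> (\<lambda>n. measure (N n) (B n))"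
    by (simp add: Lim_cong[OF Bseq_measure] Lim_add[OF Bseq_measure Bseq_measure])
  moreover have "(\<lambda>n. A n \<union> B n) \<in> meas_seqs" using AB by (simp add: meas_seqs_def)
  ultimately show "premeasure (S \<union> T) = premeasure S + premeasure T"
    using AB by (simp add: internal_Un[symmetric] premeasure_internal lim_measure_def
        Lim_measure_nonneg ennreal_plus[symmetric] del: ennreal_plus)
qed

lemma premeasure_empty_continuous:
  assumes S: "range S \<subseteq> internal_sets" "decseq S" "(\<Inter>i. S i) = {}"
  shows "(\<lambda>i. premeasure (S i)) \<longlonglongrightarrow> 0"
proof -
  obtain A where A: "\<And>i. A i \<in> meas_seqs" "\<And>i. S i = I (A i)"
    using internal_sets_seqE[OF S(1)] by metis
  have "\<exists>k. S k = {}"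
  proof (rule ccontr)
    assume "\<nexists>k. S k = {}"
    moreover have "(\<Inter>i\<le>k. S i) = S k" for k
      using S(2) by (auto simp: decseq_def)
    ultimately have "(\<Inter>i\<le>k. I (A i)) \<noteq> {}" for k by (simp add: A(2)[symmetric])
    then have "(\<Inter>i. I (A i)) \<noteq> {}" by (rule countable_saturation)
    with S(3) A(2) show False by simp
  qed
  then obtain k where "S k = {}" by blast
  then have "S i = {}" if "k \<le> i" for i
    using S(2) that by (auto simp: decseq_def)
  then have "eventually (\<lambda>i. premeasure (S i) = 0) sequentially"
    using positive_premeasure by (intro eventually_sequentiallyI[of k]) (simp add: positive_def)
  then show ?thesis by (rule tendsto_eventually)
qed

lemma countably_additive_premeasure: "countably_additive internal_sets premeasure"
proof (rule internal.empty_continuous_imp_countably_additive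
    [OF positive_premeasure additive_premeasure _ premeasure_empty_continuous])
  show "\<forall>S\<in>internal_sets. premeasure S \<noteq> \<infinity>"
    by (auto elim!: internal_setsE simp: premeasure_internal lim_measure_def)
qed

lemma loeb_outer_eq_outer_measure:
  "loeb_outer \<Omega> I lim_measure meas_seqs X = outer_measure internal_sets premeasure X"
proof (rule antisym)
  show "loeb_outer \<Omega> I lim_measure meas_seqs X \<le> outer_measure internal_sets premeasure X"
    unfolding outer_measure_def
  proof (rule INF_greatest, clarify)
    fix S :: "nat \<Rightarrow> 'c set" assume S: "range S \<subseteq> internal_sets" "X \<subseteq> (\<Union>i. S i)"
    obtain A where A: "\<And>i. A i \<in> meas_seqs" "\<And>i. S i = I (A i)"
      using internal_sets_seqE[OF S(1)] by metis
    have "loeb_outer \<Omega> I lim_measure meas_seqs X \<le> (\<Sum>i. lim_measure (A i))"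
      unfolding loeb_outer_def by (rule INF_lower) (use A S(2) in auto)
    also have "\<dots> = (\<Sum>i. premeasure (S i))" by (simp add: A premeasure_internal)
    finally show "loeb_outer \<Omega> I lim_measure meas_seqs X \<le> (\<Sum>i. premeasure (S i))" .
  qed
next
  show "outer_measure internal_sets premeasure X \<le> loeb_outer \<Omega> I lim_measure meas_seqs X"
    unfolding loeb_outer_def
  proof (rule INF_greatest, clarify)
    fix A :: "nat \<Rightarrow> nat \<Rightarrow> 'x set" assume A: "range A \<subseteq> meas_seqs" "X \<subseteq> (\<Union>i. I (A i))"
    have "outer_measure internal_sets premeasure X \<le> (\<Sum>i. premeasure (I (A i)))"
      using A by (intro internal.outer_measure_le positive_premeasure
          internal.additive_increasing additive_premeasure) (auto intro: internal_setsI)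
    also have "\<dots> = (\<Sum>i. lim_measure (A i))" using A(1) by (simp add: premeasure_internal range_subsetD)
    finally show "outer_measure internal_sets premeasure X \<le> (\<Sum>i. lim_measure (A i))" .
  qed
qed

lemma loeb_eq_measure_of: "loeb = measure_of \<Omega> internal_sets (outer_measure internal_sets premeasure)"
  unfolding loeb_def loeb_measure_def internal_sets_def[symmetric]
  by (simp add: loeb_outer_eq_outer_measure[abs_def])

lemma sets_loeb: "sets loeb = sigma_sets \<Omega> internal_sets"
  unfolding loeb_eq_measure_of by (rule sets_measure_of[OF internal.space_closed])

lemma space_loeb: "space loeb = \<Omega>"
  unfolding loeb_eq_measure_of by (rule space_measure_of[OF internal.space_closed])

lemma internal_in_sets_loeb: "A \<in> meas_seqs \<Longrightarrow> I A \<in> sets loeb"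
  by (simp add: sets_loeb internal_setsI)

lemma emeasure_loeb_internal: "A \<in> meas_seqs \<Longrightarrow> emeasure loeb (I A) = lim_measure A"
  using internal.measure_space_outer_measure[OF positive_premeasure countably_additive_premeasure]
    internal.outer_measure_agrees[OF positive_premeasure countably_additive_premeasure]
  by (simp add: loeb_eq_measure_of emeasure_measure_of_conv internal_setsI premeasure_internal)

lemma measure_loeb_internal:
  "A \<in> meas_seqs \<Longrightarrow> measure loeb (I A) = Lim \<alpha> (\<lambda>n. measure (N n) (A n))"
  using emeasure_loeb_internal[of A] Lim_measure_nonneg[of A]
  by (simp add: measure_def[of loeb] lim_measure_def)

lemma prob_space_loeb: "prob_space loeb"
proof
  have "emeasure loeb (I (\<lambda>n. space (N n))) = 1"
    by (simp add: emeasure_loeb_internal meas_seqs_def lim_measure_def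
        prob_space.prob_space[OF prob_space_N] Lim_const)
  then show "emeasure loeb (space loeb) = 1" by (simp add: internal_space space_loeb)
qed

lemma loeb_eqI:
  assumes "sets M = sets loeb" "emeasure M \<Omega> \<noteq> \<infinity>"
    and "\<And>A. A \<in> meas_seqs \<Longrightarrow> emeasure M (I A) = lim_measure A"
  shows "M = loeb"
proof (rule measure_eqI_generator_eq[OF internal.Int_stable internal.space_closed])
  show "sets M = sigma_sets \<Omega> internal_sets" "sets loeb = sigma_sets \<Omega> internal_sets"
    using assms(1) by (simp_all add: sets_loeb)
  show "range (\<lambda>i. \<Omega>) \<subseteq> internal_sets" "(\<Union>i. \<Omega>) = \<Omega>" "emeasure M \<Omega> \<noteq> \<infinity>"
    using internal.top assms(2) by auto
  show "emeasure M S = emeasure loeb S" if "S \<in> internal_sets" for S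
    using that by (elim internal_setsE) (simp add: assms(3) emeasure_loeb_internal)
qed

section \<open>Standard parts and Loeb integration\<close>

definition std_part :: "(nat \<Rightarrow> 'x \<Rightarrow> real) \<Rightarrow> 'c \<Rightarrow> real" where
  "std_part \<phi> \<omega> = Lim \<alpha> (\<lambda>n. \<phi> n (r \<omega> n))"

lemma Bseq_rep:
  fixes \<phi> :: "nat \<Rightarrow> 'x \<Rightarrow> real"
  assumes "\<And>n x. x \<in> space (N n) \<Longrightarrow> \<bar>\<phi> n x\<bar> \<le> B" "\<omega> \<in> \<Omega>"
  shows "Bseq (\<lambda>n. \<phi> n (r \<omega> n))"
  using assms(1)[OF rep_in_space[OF assms(2)]] by (intro BseqI') simp

lemma std_part_mono:
  fixes \<phi> \<psi> :: "nat \<Rightarrow> 'x \<Rightarrow> real"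
  assumes "\<And>n x. x \<in> space (N n) \<Longrightarrow> \<bar>\<phi> n x\<bar> \<le> B" "\<And>n x. x \<in> space (N n) \<Longrightarrow> \<bar>\<psi> n x\<bar> \<le> B"
    and "\<And>n x. x \<in> space (N n) \<Longrightarrow> \<phi> n x \<le> \<psi> n x" "\<omega> \<in> \<Omega>"
  shows "std_part \<phi> \<omega> \<le> std_part \<psi> \<omega>"
proof -
  have "\<forall>n. \<phi> n (r \<omega> n) \<le> \<psi> n (r \<omega> n)"
    using assms(3) rep_in_space[OF assms(4)] by blast
  then show ?thesis unfolding std_part_def
    by (intro Lim_mono Bseq_rep[OF assms(1,4)] Bseq_rep[OF assms(2,4)] always_eventually)
qed

lemma std_part_bounded:
  fixes \<phi> :: "nat \<Rightarrow> 'x \<Rightarrow> real"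
  assumes "\<And>n x. x \<in> space (N n) \<Longrightarrow> \<bar>\<phi> n x\<bar> \<le> B" "\<omega> \<in> \<Omega>"
  shows "\<bar>std_part \<phi> \<omega>\<bar> \<le> B"
proof -
  have B: "\<bar>B\<bar> \<le> B" using assms(1) prob_space.not_empty[OF prob_space_N, of 0] by fastforce
  have "- B \<le> \<phi> n x" "\<phi> n x \<le> B" if "x \<in> space (N n)" for n x
    using assms(1)[OF that] by arith+
  then have "std_part (\<lambda>n x. - B) \<omega> \<le> std_part \<phi> \<omega>" "std_part \<phi> \<omega> \<le> std_part (\<lambda>n x. B) \<omega>"
    using B assms by (auto intro!: std_part_mono)
  then show ?thesis by (simp add: std_part_def Lim_const abs_le_iff)
qed

lemma std_part_nonneg:
  fixes \<phi> :: "nat \<Rightarrow> 'x \<Rightarrow> real"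
  assumes "\<And>n x. x \<in> space (N n) \<Longrightarrow> 0 \<le> \<phi> n x \<and> \<phi> n x \<le> 1" "\<omega> \<in> \<Omega>"
  shows "0 \<le> std_part \<phi> \<omega>"
  using std_part_mono[of "\<lambda>n x. 0" 1 \<phi> \<omega>] assms by (force simp: std_part_def Lim_const)

lemma std_part_add_const:
  fixes \<phi> :: "nat \<Rightarrow> 'x \<Rightarrow> real"
  assumes "\<And>n x. x \<in> space (N n) \<Longrightarrow> \<bar>\<phi> n x\<bar> \<le> B" "\<omega> \<in> \<Omega>"
  shows "std_part (\<lambda>n x. \<phi> n x + c) \<omega> = std_part \<phi> \<omega> + c"
  using Lim_add[OF Bseq_rep[OF assms] Bfun_const[of c]] by (simp add: std_part_def Lim_const)

lemma std_part_indicator: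
  assumes "\<omega> \<in> \<Omega>"
  shows "std_part (\<lambda>n. indicator (A n)) \<omega> = indicator (I A) \<omega>"
proof (cases "\<omega> \<in> I A")
  case True
  then have "eventually (\<lambda>n. indicator (A n) (r \<omega> n) = (1::real)) \<alpha>"
    by (auto simp: mem_internal elim: eventually_mono)
  then show ?thesis
    using True Lim_cong[OF Bfun_const, of 1] by (simp add: std_part_def Lim_const)
next
  case False
  then have "eventually (\<lambda>n. indicator (A n) (r \<omega> n) = (0::real)) \<alpha>"
    using assms eventually_not_iff[of "\<lambda>n. r \<omega> n \<in> A n"] by (auto simp: mem_internal elim: eventually_mono)
  then show ?thesis
    using False Lim_cong[OF Bfun_const, of 0] by (simp add: std_part_def Lim_const)
qed

lemma borel_measurable_std_part:
  fixes \<phi> :: "nat \<Rightarrow> 'x \<Rightarrow> real"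
  assumes meas[measurable]: "\<And>n. \<phi> n \<in> borel_measurable (N n)"
    and bnd: "\<And>n x. x \<in> space (N n) \<Longrightarrow> \<bar>\<phi> n x\<bar> \<le> B"
  shows "std_part \<phi> \<in> borel_measurable loeb"
  unfolding borel_measurable_iff_greater space_loeb
proof
  fix a
  let ?U = "\<lambda>m n. {x \<in> space (N n). a + 1 / Suc m < \<phi> n x}"
  have "{\<omega> \<in> \<Omega>. a < std_part \<phi> \<omega>} = (\<Union>m. I (?U m))"
  proof (rule Set.set_eqI, rule iffI)
    fix \<omega> assume "\<omega> \<in> {\<omega> \<in> \<Omega>. a < std_part \<phi> \<omega>}"
    then have \<omega>: "\<omega> \<in> \<Omega>" "a < std_part \<phi> \<omega>" by auto
    then obtain m where "1 / Suc m < std_part \<phi> \<omega> - a"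
      using reals_Archimedean[of "std_part \<phi> \<omega> - a"] by (auto simp: inverse_eq_divide)
    then have "a + 1 / Suc m < std_part \<phi> \<omega>" by linarith
    then have "eventually (\<lambda>n. a + 1 / Suc m < \<phi> n (r \<omega> n)) \<alpha>"
      using Lim_eventually_less[OF Bseq_rep[OF bnd \<omega>(1)]] by (simp add: std_part_def)
    then show "\<omega> \<in> (\<Union>m. I (?U m))"
      using \<omega>(1) rep_in_space[OF \<omega>(1)] by (auto simp: mem_internal elim!: eventually_mono)
  next
    fix \<omega> assume "\<omega> \<in> (\<Union>m. I (?U m))"
    then obtain m where "\<omega> \<in> I (?U m)" by blast
    then have \<omega>: "\<omega> \<in> \<Omega>" "eventually (\<lambda>n. a + 1 / Suc m \<le> \<phi> n (r \<omega> n)) \<alpha>"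
      unfolding mem_internal by (auto elim: eventually_mono)
    then have "a + 1 / Suc m \<le> std_part \<phi> \<omega>"
      unfolding std_part_def
      using Lim_mono[OF Bfun_const[of "a + 1 / real (Suc m)"] Bseq_rep[OF bnd \<omega>(1)]]
      by (simp add: Lim_const)
    moreover have "0 < 1 / real (Suc m)" by simp
    ultimately have "a < std_part \<phi> \<omega>" by linarith
    with \<omega>(1) show "\<omega> \<in> {\<omega> \<in> \<Omega>. a < std_part \<phi> \<omega>}" by simp
  qed
  moreover have "I (?U m) \<in> sets loeb" for m
    by (rule internal_in_sets_loeb) (simp add: meas_seqs_def)
  ultimately show "{\<omega> \<in> \<Omega>. a < std_part \<phi> \<omega>} \<in> sets loeb" by auto
qed

lemma integrable_std_part:
  fixes \<phi> :: "nat \<Rightarrow> 'x \<Rightarrow> real"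
  assumes "\<And>n. \<phi> n \<in> borel_measurable (N n)" "\<And>n x. x \<in> space (N n) \<Longrightarrow> \<bar>\<phi> n x\<bar> \<le> B"
  shows "integrable loeb (std_part \<phi>)"
proof -
  interpret L: prob_space loeb by (rule prob_space_loeb)
  show ?thesis
    using std_part_bounded[OF assms(2)] borel_measurable_std_part[OF assms]
    by (intro L.integrable_const_bound[where B=B] AE_I2) (auto simp: space_loeb)
qed

lemma integral_N_bounded:
  fixes \<phi> :: "nat \<Rightarrow> 'x \<Rightarrow> real"
  assumes "\<And>n. \<phi> n \<in> borel_measurable (N n)" "\<And>n x. x \<in> space (N n) \<Longrightarrow> \<bar>\<phi> n x\<bar> \<le> B"
  shows "integrable (N n) (\<phi> n)" "\<bar>\<integral>x. \<phi> n x \<partial>N n\<bar> \<le> B"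
proof -
  interpret prob_space "N n" by (rule prob_space_N)
  show int: "integrable (N n) (\<phi> n)"
    using assms by (intro integrable_const_bound[of _ B]) auto
  have "\<bar>\<integral>x. \<phi> n x \<partial>N n\<bar> \<le> (\<integral>x. \<bar>\<phi> n x\<bar> \<partial>N n)"
    by (rule integral_abs_bound)
  also have "\<dots> \<le> B"
    using int assms(2) by (intro integral_le_const) auto
  finally show "\<bar>\<integral>x. \<phi> n x \<partial>N n\<bar> \<le> B" .
qed

lemma Lim_integral_mono:
  fixes \<phi> \<psi> :: "nat \<Rightarrow> 'x \<Rightarrow> real"
  assumes "\<And>n. \<phi> n \<in> borel_measurable (N n)" "\<And>n x. x \<in> space (N n) \<Longrightarrow> \<bar>\<phi> n x\<bar> \<le> B"
    and "\<And>n. \<psi> n \<in> borel_measurable (N n)" "\<And>n x. x \<in> space (N n) \<Longrightarrow> \<bar>\<psi> n x\<bar> \<le> B"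
    and "\<And>n x. x \<in> space (N n) \<Longrightarrow> \<phi> n x \<le> \<psi> n x"
  shows "Lim \<alpha> (\<lambda>n. \<integral>x. \<phi> n x \<partial>N n) \<le> Lim \<alpha> (\<lambda>n. \<integral>x. \<psi> n x \<partial>N n)"
  using integral_N_bounded[OF assms(1,2)] integral_N_bounded[OF assms(3,4)] assms(5)
  by (intro Lim_mono BseqI' always_eventually allI integral_mono) auto

lemma std_part_step:
  fixes c :: "nat \<Rightarrow> real"
  assumes "\<omega> \<in> \<Omega>"
  shows "std_part (\<lambda>n x. \<Sum>j\<le>k. c j * indicator (E j n) x) \<omega> = (\<Sum>j\<le>k. c j * indicator (I (E j)) \<omega>)"
proof -
  have ind: "Bseq (\<lambda>n. indicator (E j n) (r \<omega> n) :: real)" for j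
    by (rule Bseq_unit_interval) simp
  have "Lim \<alpha> (\<lambda>n. c j * indicator (E j n) (r \<omega> n)) = c j * indicator (I (E j)) \<omega>" for j
    using Lim_mult[OF Bfun_const[of "c j"] ind] std_part_indicator[OF assms, of "E j"]
    by (simp only: std_part_def Lim_const)
  then show ?thesis
    unfolding std_part_def by (subst Lim_sum) (auto intro: Bseq_mult ind)
qed

lemma integral_std_part_step:
  fixes c :: "nat \<Rightarrow> real"
  assumes "\<And>j. E j \<in> meas_seqs"
  shows "(\<integral>\<omega>. std_part (\<lambda>n x. \<Sum>j\<le>k. c j * indicator (E j n) x) \<omega> \<partial>loeb) =
    Lim \<alpha> (\<lambda>n. \<integral>x. (\<Sum>j\<le>k. c j * indicator (E j n) x) \<partial>N n)"
proof -
  interpret L: prob_space loeb by (rule prob_space_loeb)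
  have "(\<integral>\<omega>. std_part (\<lambda>n x. \<Sum>j\<le>k. c j * indicator (E j n) x) \<omega> \<partial>loeb) =
      (\<integral>\<omega>. (\<Sum>j\<le>k. c j * indicator (I (E j)) \<omega>) \<partial>loeb)"
    by (rule Bochner_Integration.integral_cong[OF refl]) (simp only: space_loeb std_part_step)
  also have "\<dots> = (\<Sum>j\<le>k. c j * measure loeb (I (E j)))"
    using internal_in_sets_loeb[OF assms]
    by (subst Bochner_Integration.integral_sum)
      (auto intro!: integrable_mult_right integrable_real_indicator simp: L.emeasure_eq_measure)
  also have "\<dots> = Lim \<alpha> (\<lambda>n. \<Sum>j\<le>k. c j * measure (N n) (E j n))"
    by (subst Lim_sum) (auto intro: Bseq_mult Bseq_measure
        simp: Lim_mult[OF Bfun_const Bseq_measure] Lim_const measure_loeb_internal[OF assms])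
  also have "(\<lambda>n. \<Sum>j\<le>k. c j * measure (N n) (E j n)) = (\<lambda>n. \<integral>x. (\<Sum>j\<le>k. c j * indicator (E j n) x) \<partial>N n)"
  proof
    fix n
    interpret prob_space "N n" by (rule prob_space_N)
    show "(\<Sum>j\<le>k. c j * measure (N n) (E j n)) = (\<integral>x. (\<Sum>j\<le>k. c j * indicator (E j n) x) \<partial>N n)"
      using meas_seqsD[OF assms]
      by (subst Bochner_Integration.integral_sum)
        (auto intro!: integrable_mult_right integrable_real_indicator simp: emeasure_eq_measure)
  qed
  finally show ?thesis .
qed

lemma integral_std_part_squeeze:
  fixes \<phi> \<psi> :: "nat \<Rightarrow> 'x \<Rightarrow> real"
  assumes \<phi>: "\<And>n. \<phi> n \<in> borel_measurable (N n)" "\<And>n x. x \<in> space (N n) \<Longrightarrow> \<bar>\<phi> n x\<bar> \<le> B"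
    and \<psi>: "\<And>n. \<psi> n \<in> borel_measurable (N n)" "\<And>n x. x \<in> space (N n) \<Longrightarrow> \<bar>\<psi> n x\<bar> \<le> B"
      "\<And>n x. x \<in> space (N n) \<Longrightarrow> \<bar>\<psi> n x + \<epsilon>\<bar> \<le> B"
    and squeeze: "\<And>n x. x \<in> space (N n) \<Longrightarrow> \<psi> n x \<le> \<phi> n x \<and> \<phi> n x \<le> \<psi> n x + \<epsilon>"
    and exact: "(\<integral>\<omega>. std_part \<psi> \<omega> \<partial>loeb) = Lim \<alpha> (\<lambda>n. \<integral>x. \<psi> n x \<partial>N n)"
  shows "\<bar>(\<integral>\<omega>. std_part \<phi> \<omega> \<partial>loeb) - Lim \<alpha> (\<lambda>n. \<integral>x. \<phi> n x \<partial>N n)\<bar> \<le> \<epsilon>"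
proof -
  interpret L: prob_space loeb by (rule prob_space_loeb)
  have std: "std_part \<psi> \<omega> \<le> std_part \<phi> \<omega> \<and> std_part \<phi> \<omega> \<le> std_part \<psi> \<omega> + \<epsilon>" if "\<omega> \<in> \<Omega>" for \<omega>
    using std_part_mono[OF \<psi>(2) \<phi>(2) _ that] std_part_mono[OF \<phi>(2) \<psi>(3) _ that]
      std_part_add_const[OF \<psi>(2) that] squeeze by simp
  have int_\<psi>: "integrable loeb (std_part \<psi>)" and int_\<phi>: "integrable loeb (std_part \<phi>)"
    using integrable_std_part \<phi> \<psi> by blast+
  have "(\<integral>\<omega>. std_part \<psi> \<omega> \<partial>loeb) \<le> (\<integral>\<omega>. std_part \<phi> \<omega> \<partial>loeb)"
    by (rule integral_mono[OF int_\<psi> int_\<phi>]) (use std in \<open>auto simp: space_loeb\<close>)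
  moreover have "(\<integral>\<omega>. std_part \<phi> \<omega> \<partial>loeb) \<le> (\<integral>\<omega>. std_part \<psi> \<omega> + \<epsilon> \<partial>loeb)"
    by (rule integral_mono[OF int_\<phi> Bochner_Integration.integrable_add[OF int_\<psi> L.integrable_const]])
      (use std in \<open>auto simp: space_loeb\<close>)
  moreover have "Lim \<alpha> (\<lambda>n. \<integral>x. \<psi> n x \<partial>N n) \<le> Lim \<alpha> (\<lambda>n. \<integral>x. \<phi> n x \<partial>N n)"
      "Lim \<alpha> (\<lambda>n. \<integral>x. \<phi> n x \<partial>N n) \<le> Lim \<alpha> (\<lambda>n. \<integral>x. \<psi> n x + \<epsilon> \<partial>N n)"
    using squeeze \<phi> \<psi> by (intro Lim_integral_mono[where B=B]; simp)+
  moreover have "(\<integral>x. \<psi> n x + \<epsilon> \<partial>N n) = (\<integral>x. \<psi> n x \<partial>N n) + \<epsilon>" for n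
  proof -
    interpret prob_space "N n" by (rule prob_space_N)
    show ?thesis using integral_N_bounded(1)[OF \<psi>(1,2)] by (simp add: prob_space)
  qed
  then have "Lim \<alpha> (\<lambda>n. \<integral>x. \<psi> n x + \<epsilon> \<partial>N n) = Lim \<alpha> (\<lambda>n. \<integral>x. \<psi> n x \<partial>N n) + \<epsilon>"
    using Lim_add[OF BseqI' Bfun_const, of _ B \<epsilon>] integral_N_bounded(2)[OF \<psi>(1,2)]
    by (simp add: Lim_const)
  ultimately show ?thesis
    using int_\<psi> exact by (simp add: L.prob_space)
qed

text \<open>Approximation from below by the step functions \<open>\<lfloor>k \<phi>\<rfloor>/k\<close>.\<close>
lemma integral_std_part_approx:
  fixes \<phi> :: "nat \<Rightarrow> 'x \<Rightarrow> real" and k :: nat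
  assumes meas[measurable]: "\<And>n. \<phi> n \<in> borel_measurable (N n)"
    and bnd: "\<And>n x. x \<in> space (N n) \<Longrightarrow> 0 \<le> \<phi> n x \<and> \<phi> n x \<le> 1"
    and k: "1 \<le> k"
  shows "\<bar>(\<integral>\<omega>. std_part \<phi> \<omega> \<partial>loeb) - Lim \<alpha> (\<lambda>n. \<integral>x. \<phi> n x \<partial>N n)\<bar> \<le> 1 / k"
proof -
  define E where "E j n = {x \<in> space (N n). k * \<phi> n x \<in> {real j..<real j + 1}}" for j n
  have E_sets[measurable]: "E j n \<in> sets (N n)" for j n
    unfolding E_def by measurable
  then have E: "E j \<in> meas_seqs" for j by (simp add: meas_seqs_def)
  define \<psi> where "\<psi> n x = (\<Sum>j\<le>k. real j / k * indicator (E j n) x)" for n x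
  have \<psi>_floor: "\<psi> n x = \<lfloor>k * \<phi> n x\<rfloor> / k" if "x \<in> space (N n)" for n x
  proof -
    have "k * \<phi> n x \<le> real k"
      using bnd[OF that] by (intro mult_left_le) auto
    then have floor: "of_int \<lfloor>k * \<phi> n x\<rfloor> = (\<Sum>j\<le>k. real j * indicator {real j..<real j + 1} (k * \<phi> n x))"
      using bnd[OF that] by (intro floor_eq_sum_indicator) auto
    have "\<psi> n x = (\<Sum>j\<le>k. real j * indicator {real j..<real j + 1} (k * \<phi> n x)) / k"
      unfolding \<psi>_def sum_divide_distrib using that by (intro sum.cong refl) (simp add: E_def indicator_def)
    then show ?thesis unfolding floor .
  qed
  have \<psi>_\<phi>: "0 \<le> \<psi> n x \<and> \<psi> n x \<le> \<phi> n x \<and> \<phi> n x \<le> \<psi> n x + 1 / k" if "x \<in> space (N n)" for n x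
  proof -
    let ?t = "k * \<phi> n x"
    have "0 \<le> ?t" using bnd[OF that] by simp
    then have "0 \<le> \<lfloor>?t\<rfloor>" "of_int \<lfloor>?t\<rfloor> \<le> ?t" "?t \<le> of_int \<lfloor>?t\<rfloor> + 1"
      using floor_correct[of ?t] by auto
    then show ?thesis
      using k by (simp add: \<psi>_floor[OF that] field_simps)
  qed
  have "0 \<le> 1 / real k" "1 / real k \<le> 1" using k by simp_all
  then have bnd2: "\<bar>\<phi> n x\<bar> \<le> 2" "\<bar>\<psi> n x\<bar> \<le> 2" "\<bar>\<psi> n x + 1 / k\<bar> \<le> 2" if "x \<in> space (N n)" for n x
    using bnd[OF that] \<psi>_\<phi>[OF that] by linarith+
  show ?thesis
  proof (rule integral_std_part_squeeze[OF meas bnd2(1) _ bnd2(2,3)])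
    show "\<psi> n \<in> borel_measurable (N n)" for n
      unfolding \<psi>_def by measurable
    show "(\<integral>\<omega>. std_part \<psi> \<omega> \<partial>loeb) = Lim \<alpha> (\<lambda>n. \<integral>x. \<psi> n x \<partial>N n)"
      unfolding \<psi>_def by (rule integral_std_part_step[OF E])
  qed (use \<psi>_\<phi> in auto)
qed

lemma integral_std_part:
  fixes \<phi> :: "nat \<Rightarrow> 'x \<Rightarrow> real"
  assumes "\<And>n. \<phi> n \<in> borel_measurable (N n)"
    and "\<And>n x. x \<in> space (N n) \<Longrightarrow> 0 \<le> \<phi> n x \<and> \<phi> n x \<le> 1"
  shows "(\<integral>\<omega>. std_part \<phi> \<omega> \<partial>loeb) = Lim \<alpha> (\<lambda>n. \<integral>x. \<phi> n x \<partial>N n)"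
proof (rule ccontr)
  define d where "d = \<bar>(\<integral>\<omega>. std_part \<phi> \<omega> \<partial>loeb) - Lim \<alpha> (\<lambda>n. \<integral>x. \<phi> n x \<partial>N n)\<bar>"
  assume "(\<integral>\<omega>. std_part \<phi> \<omega> \<partial>loeb) \<noteq> Lim \<alpha> (\<lambda>n. \<integral>x. \<phi> n x \<partial>N n)"
  then have "0 < d" unfolding d_def by simp
  then obtain m where "inverse (real (Suc m)) < d" using reals_Archimedean by blast
  moreover have "d \<le> 1 / real (Suc m)"
    using integral_std_part_approx[OF assms, of "Suc m"] unfolding d_def by simp
  ultimately show False by (simp add: inverse_eq_divide)
qed

end

section \<open>Kernels and maps between Loeb spaces\<close>

locale loeb_spaces =
  src: loeb_space \<alpha> \<Omega> r N I + tgt: loeb_space \<alpha> \<Omega>' r' N' I'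
  for \<alpha> and \<Omega> :: "'c set" and r :: "'c \<Rightarrow> nat \<Rightarrow> 'x" and N I
    and \<Omega>' :: "'d set" and r' :: "'d \<Rightarrow> nat \<Rightarrow> 'y" and N' I'
begin

text \<open>A family of probability measures \<open>K \<omega>\<close> whose values on internal sets are standard parts
  of internal \<open>[0, 1]\<close>-valued functions is a kernel, and it disintegrates the target Loeb
  measure if the internal functions integrate to the measures of the factors.\<close>
lemma measurable_kernel:
  fixes \<phi> :: "(nat \<Rightarrow> 'y set) \<Rightarrow> nat \<Rightarrow> 'x \<Rightarrow> real"
  assumes prob: "\<And>\<omega>. \<omega> \<in> \<Omega> \<Longrightarrow> prob_space (K \<omega>)"
    and sets: "\<And>\<omega>. \<omega> \<in> \<Omega> \<Longrightarrow> sets (K \<omega>) = sets tgt.loeb"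
    and internal: "\<And>\<omega> A. \<omega> \<in> \<Omega> \<Longrightarrow> A \<in> tgt.meas_seqs \<Longrightarrow>
      emeasure (K \<omega>) (I' A) = ennreal (src.std_part (\<phi> A) \<omega>)"
    and meas: "\<And>A n. A \<in> tgt.meas_seqs \<Longrightarrow> \<phi> A n \<in> borel_measurable (N n)"
    and bnd: "\<And>A n x. A \<in> tgt.meas_seqs \<Longrightarrow> x \<in> space (N n) \<Longrightarrow> 0 \<le> \<phi> A n x \<and> \<phi> A n x \<le> 1"
  shows "K \<in> src.loeb \<rightarrow>\<^sub>M subprob_algebra tgt.loeb"
proof (intro measurable_prob_algebraD measurable_prob_algebra_generated
    [OF tgt.sets_loeb tgt.internal.Int_stable tgt.internal.space_closed])
  show "prob_space (K \<omega>)" "sets (K \<omega>) = sets tgt.loeb" if "\<omega> \<in> space src.loeb" for \<omega>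
    using prob sets that by (simp_all add: src.space_loeb)
  fix S assume "S \<in> tgt.internal_sets"
  then obtain A where A: "A \<in> tgt.meas_seqs" "S = I' A" by (rule tgt.internal_setsE)
  have abs_bnd: "\<bar>\<phi> A n x\<bar> \<le> 1" if "x \<in> space (N n)" for n x
    using bnd[OF A(1) that] by simp
  have "(\<lambda>\<omega>. ennreal (src.std_part (\<phi> A) \<omega>)) \<in> borel_measurable src.loeb"
    using src.borel_measurable_std_part[OF meas[OF A(1)] abs_bnd] by measurable
  then show "(\<lambda>\<omega>. emeasure (K \<omega>) S) \<in> borel_measurable src.loeb"
    by (rule measurable_cong[THEN iffD2, rotated]) (simp add: A internal src.space_loeb)
qed

lemma bind_kernel_eq:
  fixes \<phi> :: "(nat \<Rightarrow> 'y set) \<Rightarrow> nat \<Rightarrow> 'x \<Rightarrow> real"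
  assumes prob: "\<And>\<omega>. \<omega> \<in> \<Omega> \<Longrightarrow> prob_space (K \<omega>)"
    and sets: "\<And>\<omega>. \<omega> \<in> \<Omega> \<Longrightarrow> sets (K \<omega>) = sets tgt.loeb"
    and internal: "\<And>\<omega> A. \<omega> \<in> \<Omega> \<Longrightarrow> A \<in> tgt.meas_seqs \<Longrightarrow>
      emeasure (K \<omega>) (I' A) = ennreal (src.std_part (\<phi> A) \<omega>)"
    and meas: "\<And>A n. A \<in> tgt.meas_seqs \<Longrightarrow> \<phi> A n \<in> borel_measurable (N n)"
    and bnd: "\<And>A n x. A \<in> tgt.meas_seqs \<Longrightarrow> x \<in> space (N n) \<Longrightarrow> 0 \<le> \<phi> A n x \<and> \<phi> A n x \<le> 1"
    and integral: "\<And>A n. A \<in> tgt.meas_seqs \<Longrightarrow> (\<integral>x. \<phi> A n x \<partial>N n) = measure (N' n) (A n)"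
  shows "src.loeb \<bind> K = tgt.loeb"
proof (rule tgt.loeb_eqI)
  note K = measurable_kernel[OF prob sets internal meas bnd]
  interpret src_prob: prob_space src.loeb by (rule src.prob_space_loeb)
  interpret bind: subprob_space "src.loeb \<bind> K"
    by (rule subprob_space_bind[OF src_prob.subprob_space_axioms K])
  show "sets (src.loeb \<bind> K) = sets tgt.loeb"
    by (rule sets_bind_measurable[OF K src_prob.not_empty])
  show "emeasure (src.loeb \<bind> K) \<Omega>' \<noteq> \<infinity>"
    using bind.emeasure_finite by simp
  fix A assume A: "A \<in> tgt.meas_seqs"
  have abs_bnd: "\<bar>\<phi> A n x\<bar> \<le> 1" if "x \<in> space (N n)" for n x
    using bnd[OF A that] by simp
  have "emeasure (src.loeb \<bind> K) (I' A) = (\<integral>\<^sup>+\<omega>. ennreal (src.std_part (\<phi> A) \<omega>) \<partial>src.loeb)"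
    using tgt.internal_in_sets_loeb[OF A]
    by (simp add: emeasure_bind[OF src_prob.not_empty K])
      (intro nn_integral_cong, simp add: internal[OF _ A] src.space_loeb)
  also have "\<dots> = ennreal (\<integral>\<omega>. src.std_part (\<phi> A) \<omega> \<partial>src.loeb)"
    using src.std_part_nonneg[OF bnd[OF A]]
    by (intro nn_integral_eq_integral src.integrable_std_part[OF meas[OF A] abs_bnd] AE_I2)
      (auto simp: src.space_loeb)
  also have "\<dots> = tgt.lim_measure A"
    using src.integral_std_part[OF meas[OF A] bnd[OF A]] by (simp add: tgt.lim_measure_def integral[OF A])
  finally show "emeasure (src.loeb \<bind> K) (I' A) = tgt.lim_measure A" .
qed

end

locale loeb_map = loeb_spaces +
  fixes F and f
  assumes map_in: "\<And>\<omega>. \<omega> \<in> \<Omega> \<Longrightarrow> F \<omega> \<in> \<Omega>'"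
    and measurable_factors: "\<And>n. f n \<in> N n \<rightarrow>\<^sub>M N' n"
    and rep_map: "\<And>\<omega>. \<omega> \<in> \<Omega> \<Longrightarrow> eventually (\<lambda>n. r' (F \<omega>) n = f n (r \<omega> n)) \<alpha>"
begin

lemma vimage_internal: "F -` I' A \<inter> \<Omega> = I (\<lambda>n. f n -` A n \<inter> space (N n))"
proof (rule Set.set_eqI)
  fix \<omega>
  show "\<omega> \<in> F -` I' A \<inter> \<Omega> \<longleftrightarrow> \<omega> \<in> I (\<lambda>n. f n -` A n \<inter> space (N n))"
  proof (cases "\<omega> \<in> \<Omega>")
    case True
    have "eventually (\<lambda>n. r' (F \<omega>) n \<in> A n) \<alpha> \<longleftrightarrow> eventually (\<lambda>n. f n (r \<omega> n) \<in> A n) \<alpha>"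
      using rep_map[OF True] by (auto elim: eventually_elim2)
    then show ?thesis
      using True map_in[OF True] src.rep_in_space[OF True] by (simp add: src.mem_internal tgt.mem_internal)
  qed (simp add: src.mem_internal)
qed

lemma vimage_meas_seqs: "A \<in> tgt.meas_seqs \<Longrightarrow> (\<lambda>n. f n -` A n \<inter> space (N n)) \<in> src.meas_seqs"
  using measurable_sets[OF measurable_factors] by (simp add: src.meas_seqs_def tgt.meas_seqs_def)

lemma measurable_map: "F \<in> src.loeb \<rightarrow>\<^sub>M tgt.loeb"
proof (rule measurable_sigma_sets[OF tgt.sets_loeb tgt.internal.space_closed])
  show "F \<in> space src.loeb \<rightarrow> \<Omega>'" using map_in by (simp add: src.space_loeb)
  show "F -` S \<inter> space src.loeb \<in> sets src.loeb" if "S \<in> tgt.internal_sets" for S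
    using that by (elim tgt.internal_setsE)
      (simp add: src.space_loeb vimage_internal src.internal_in_sets_loeb vimage_meas_seqs)
qed

lemma emeasure_distr_internal:
  assumes "A \<in> tgt.meas_seqs"
  shows "emeasure (distr src.loeb tgt.loeb F) (I' A) = src.lim_measure (\<lambda>n. f n -` A n \<inter> space (N n))"
  using assms
  by (simp add: emeasure_distr[OF measurable_map] tgt.internal_in_sets_loeb src.space_loeb
      vimage_internal src.emeasure_loeb_internal vimage_meas_seqs)

lemma meas_pres_map:
  assumes "\<And>n. meas_pres (N n) (N' n) (f n)"
  shows "meas_pres src.loeb tgt.loeb F"
proof -
  interpret src_prob: prob_space src.loeb by (rule src.prob_space_loeb)
  have "distr src.loeb tgt.loeb F = tgt.loeb"
  proof (rule tgt.loeb_eqI)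
    show "emeasure (distr src.loeb tgt.loeb F) \<Omega>' \<noteq> \<infinity>"
      using prob_space.emeasure_space_1[OF src_prob.prob_space_distr[OF measurable_map]]
      by (simp add: tgt.space_loeb)
    show "emeasure (distr src.loeb tgt.loeb F) (I' A) = tgt.lim_measure A" if "A \<in> tgt.meas_seqs" for A
      using assms tgt.meas_seqsD[OF that]
      by (simp add: emeasure_distr_internal[OF that] src.lim_measure_def tgt.lim_measure_def
          meas_pres_def measure_def)
  qed simp
  then show ?thesis
    unfolding meas_pres_def using measurable_map emeasure_distr[OF measurable_map] by simp
qed

end

section \<open>The ultraproduct group\<close>

locale ultraprod_groups = nat_ultrafilter +
  fixes G :: "nat \<Rightarrow> 'a monoid"
  assumes group_factors: "\<And>n. group (G n)"
begin

abbreviation "U \<equiv> useqs G // urel \<alpha> G"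
abbreviation "UG \<equiv> ultraprod_group \<alpha> G"
abbreviation "cls \<equiv> uclass \<alpha> G"

text \<open>The same choice of representatives as in the multiplication of \<open>ultraprod_group\<close>.\<close>
definition rep :: "(nat \<Rightarrow> 'a) set \<Rightarrow> nat \<Rightarrow> 'a" where
  "rep X = (SOME x. x \<in> X)"

lemma equiv_urel: "equiv (useqs G) (urel \<alpha> G)"
proof (rule equivI)
  show "urel \<alpha> G \<subseteq> useqs G \<times> useqs G" "refl_on (useqs G) (urel \<alpha> G)"
    unfolding urel_def refl_on_def by auto
  show "sym (urel \<alpha> G)"
    unfolding urel_def sym_def by (simp add: eq_commute)
  show "trans (urel \<alpha> G)"
  proof (rule transI)
    fix x y z assume "(x, y) \<in> urel \<alpha> G" "(y, z) \<in> urel \<alpha> G"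
    then have "x \<in> useqs G" "z \<in> useqs G" "eventually (\<lambda>n. x n = y n \<and> y n = z n) \<alpha>"
      unfolding urel_def by (auto simp: eventually_conj_iff)
    then show "(x, z) \<in> urel \<alpha> G"
      unfolding urel_def by (simp add: eventually_mono)
  qed
qed

lemma uclass_in_U: "x \<in> useqs G \<Longrightarrow> cls x \<in> U"
  unfolding uclass_def by (rule quotientI)

lemma in_class_useqs: "X \<in> U \<Longrightarrow> x \<in> X \<Longrightarrow> x \<in> useqs G"
  using UnionI[of X U x] by (simp add: Union_quotient[OF equiv_urel])

lemma eventually_eq_in_class:
  assumes "X \<in> U" "x \<in> X" "y \<in> X"
  shows "eventually (\<lambda>n. x n = y n) \<alpha>"
proof -
  have "(x, y) \<in> urel \<alpha> G"
    using assms by (intro in_quotient_imp_in_rel[OF equiv_urel]) auto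
  then show ?thesis by (simp add: urel_def)
qed

lemma rep_in: "X \<in> U \<Longrightarrow> rep X \<in> X"
  unfolding rep_def using in_quotient_imp_non_empty[OF equiv_urel] by (simp add: some_in_eq)

lemma rep_in_carrier: "X \<in> U \<Longrightarrow> rep X n \<in> carrier (G n)"
  using in_class_useqs[OF _ rep_in] by (simp add: useqs_def)

lemma rep_uclass:
  assumes "x \<in> useqs G"
  shows "eventually (\<lambda>n. rep (cls x) n = x n) \<alpha>"
proof -
  have "x \<in> cls x" using equiv_class_self[OF equiv_urel assms] by (simp add: uclass_def)
  then show ?thesis
    by (rule eventually_eq_in_class[OF uclass_in_U[OF assms] rep_in[OF uclass_in_U[OF assms]]])
qed

lemma U_eqI:
  assumes "X \<in> U" "Y \<in> U" "eventually (\<lambda>n. rep X n = rep Y n) \<alpha>"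
  shows "X = Y"
proof (rule quotient_eqI[OF equiv_urel assms(1,2) rep_in[OF assms(1)] rep_in[OF assms(2)]])
  show "(rep X, rep Y) \<in> urel \<alpha> G"
    using in_class_useqs[OF assms(1) rep_in[OF assms(1)]] in_class_useqs[OF assms(2) rep_in[OF assms(2)]]
      assms(3) by (simp add: urel_def)
qed

lemma ex_in_class_iff:
  assumes "X \<in> U"
  shows "(\<exists>x\<in>X. eventually (\<lambda>n. P n (x n)) \<alpha>) \<longleftrightarrow> eventually (\<lambda>n. P n (rep X n)) \<alpha>"
proof
  assume "\<exists>x\<in>X. eventually (\<lambda>n. P n (x n)) \<alpha>"
  then obtain x where "x \<in> X" "eventually (\<lambda>n. P n (x n)) \<alpha>" by blast
  from this(2) eventually_eq_in_class[OF assms \<open>x \<in> X\<close> rep_in[OF assms]]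
  show "eventually (\<lambda>n. P n (rep X n)) \<alpha>" by eventually_elim simp
qed (use rep_in[OF assms] in blast)

lemma carrier_UG: "carrier UG = U"
  by (simp add: ultraprod_group_def)

lemma mult_UG: "X \<otimes>\<^bsub>UG\<^esub> Y = cls (\<lambda>n. rep X n \<otimes>\<^bsub>G n\<^esub> rep Y n)"
  by (simp add: ultraprod_group_def rep_def)

lemma one_UG: "\<one>\<^bsub>UG\<^esub> = cls (\<lambda>n. \<one>\<^bsub>G n\<^esub>)"
  by (simp add: ultraprod_group_def)

lemma mult_in_useqs: "X \<in> U \<Longrightarrow> Y \<in> U \<Longrightarrow> (\<lambda>n. rep X n \<otimes>\<^bsub>G n\<^esub> rep Y n) \<in> useqs G"
  using rep_in_carrier group.is_monoid[OF group_factors] by (simp add: useqs_def monoid.m_closed)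

lemma inv_in_useqs: "X \<in> U \<Longrightarrow> (\<lambda>n. inv\<^bsub>G n\<^esub> rep X n) \<in> useqs G"
  using rep_in_carrier group.inv_closed[OF group_factors] by (simp add: useqs_def)

lemma one_in_useqs: "(\<lambda>n. \<one>\<^bsub>G n\<^esub>) \<in> useqs G"
  using group.is_monoid[OF group_factors] by (simp add: useqs_def monoid.one_closed)

lemma mult_closed: "X \<in> U \<Longrightarrow> Y \<in> U \<Longrightarrow> X \<otimes>\<^bsub>UG\<^esub> Y \<in> U"
  unfolding mult_UG by (rule uclass_in_U[OF mult_in_useqs])

lemma one_closed: "\<one>\<^bsub>UG\<^esub> \<in> U"
  unfolding one_UG by (rule uclass_in_U[OF one_in_useqs])

lemma rep_mult:
  "X \<in> U \<Longrightarrow> Y \<in> U \<Longrightarrow> eventually (\<lambda>n. rep (X \<otimes>\<^bsub>UG\<^esub> Y) n = rep X n \<otimes>\<^bsub>G n\<^esub> rep Y n) \<alpha>"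
  unfolding mult_UG by (rule rep_uclass[OF mult_in_useqs])

lemma rep_one: "eventually (\<lambda>n. rep \<one>\<^bsub>UG\<^esub> n = \<one>\<^bsub>G n\<^esub>) \<alpha>"
  unfolding one_UG by (rule rep_uclass[OF one_in_useqs])

lemma uclass_inv_mult:
  assumes "X \<in> U"
  shows "cls (\<lambda>n. inv\<^bsub>G n\<^esub> rep X n) \<otimes>\<^bsub>UG\<^esub> X = \<one>\<^bsub>UG\<^esub>"
proof (rule U_eqI[OF mult_closed[OF uclass_in_U[OF inv_in_useqs[OF assms]] assms] one_closed])
  show "eventually (\<lambda>n. rep (cls (\<lambda>n. inv\<^bsub>G n\<^esub> rep X n) \<otimes>\<^bsub>UG\<^esub> X) n = rep \<one>\<^bsub>UG\<^esub> n) \<alpha>"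
    using rep_mult[OF uclass_in_U[OF inv_in_useqs[OF assms]] assms] rep_one
      rep_uclass[OF inv_in_useqs[OF assms]]
    by eventually_elim (simp add: group.l_inv[OF group_factors rep_in_carrier[OF assms]])
qed

lemma group_UG: "group UG"
proof (rule groupI, unfold carrier_UG)
  fix X Y Z assume XYZ: "X \<in> U" "Y \<in> U" "Z \<in> U"
  show "X \<otimes>\<^bsub>UG\<^esub> Y \<otimes>\<^bsub>UG\<^esub> Z = X \<otimes>\<^bsub>UG\<^esub> (Y \<otimes>\<^bsub>UG\<^esub> Z)"
    using XYZ mult_closed
  proof (intro U_eqI)
    show "eventually (\<lambda>n. rep (X \<otimes>\<^bsub>UG\<^esub> Y \<otimes>\<^bsub>UG\<^esub> Z) n = rep (X \<otimes>\<^bsub>UG\<^esub> (Y \<otimes>\<^bsub>UG\<^esub> Z)) n) \<alpha>"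
      using rep_mult[OF mult_closed[OF XYZ(1,2)] XYZ(3)] rep_mult[OF XYZ(1) mult_closed[OF XYZ(2,3)]]
        rep_mult[OF XYZ(1,2)] rep_mult[OF XYZ(2,3)]
      by eventually_elim
        (simp add: monoid.m_assoc[OF group.is_monoid[OF group_factors]] rep_in_carrier XYZ)
  qed auto
next
  fix X assume X: "X \<in> U"
  show "\<one>\<^bsub>UG\<^esub> \<otimes>\<^bsub>UG\<^esub> X = X"
  proof (rule U_eqI[OF mult_closed[OF one_closed X] X])
    show "eventually (\<lambda>n. rep (\<one>\<^bsub>UG\<^esub> \<otimes>\<^bsub>UG\<^esub> X) n = rep X n) \<alpha>"
      using rep_mult[OF one_closed X] rep_one
      by eventually_elim (simp add: monoid.l_one[OF group.is_monoid[OF group_factors]] rep_in_carrier X)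
  qed
  show "\<exists>Y\<in>U. Y \<otimes>\<^bsub>UG\<^esub> X = \<one>\<^bsub>UG\<^esub>"
    using uclass_inv_mult[OF X] uclass_in_U[OF inv_in_useqs[OF X]] by blast
qed (auto intro: mult_closed one_closed)

lemma inv_UG: "X \<in> U \<Longrightarrow> inv\<^bsub>UG\<^esub> X = cls (\<lambda>n. inv\<^bsub>G n\<^esub> rep X n)"
  using group.inv_equality[OF group_UG uclass_inv_mult] uclass_in_U[OF inv_in_useqs]
  by (simp add: carrier_UG)

lemma inv_closed: "X \<in> U \<Longrightarrow> inv\<^bsub>UG\<^esub> X \<in> U"
  using group.inv_closed[OF group_UG] by (simp add: carrier_UG)

lemma rep_inv: "X \<in> U \<Longrightarrow> eventually (\<lambda>n. rep (inv\<^bsub>UG\<^esub> X) n = inv\<^bsub>G n\<^esub> rep X n) \<alpha>"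
  by (simp add: inv_UG rep_uclass[OF inv_in_useqs])

end

section \<open>The ultraproduct probability group\<close>

lemma Int_stable_rectangles:
  assumes "Int_stable A"
  shows "Int_stable {S \<times> T | S T. S \<in> A \<and> T \<in> A}"
  unfolding Int_stable_def
proof clarify
  fix S T S' T' assume "S \<in> A" "T \<in> A" "S' \<in> A" "T' \<in> A"
  then have "S \<inter> S' \<in> A" "T \<inter> T' \<in> A" using assms by (auto simp: Int_stable_def)
  moreover have "S \<times> T \<inter> S' \<times> T' = (S \<inter> S') \<times> (T \<inter> T')" by blast
  ultimately show "\<exists>S'' T''. S \<times> T \<inter> S' \<times> T' = S'' \<times> T'' \<and> S'' \<in> A \<and> T'' \<in> A" by blast
qed

lemma fubini_prop_indicator:
  assumes "fubini_prop M M2" "C \<in> sets M2"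
  shows "\<And>y. y \<in> space M \<Longrightarrow> (\<lambda>x. indicator C (x, y) :: real) \<in> borel_measurable M"
    and "\<And>x. x \<in> space M \<Longrightarrow> (\<lambda>y. indicator C (x, y) :: real) \<in> borel_measurable M"
    and "(\<lambda>y. \<integral>x. indicator C (x, y) \<partial>M :: real) \<in> borel_measurable M"
    and "(\<lambda>x. \<integral>y. indicator C (x, y) \<partial>M :: real) \<in> borel_measurable M"
    and "(\<integral>y. (\<integral>x. indicator C (x, y) \<partial>M) \<partial>M :: real) = measure M2 C"
    and "(\<integral>x. (\<integral>y. indicator C (x, y) \<partial>M) \<partial>M :: real) = measure M2 C"
  using assms(1)[unfolded fubini_prop_def, rule_format, of "indicator C"] assms(2)
    sets.sets_into_space[OF assms(2)]
  by (auto simp: Int_absorb2 intro: exI[of _ 1])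

lemma fubini_prop_measurable_Pair:
  assumes "fubini_prop M M2" "space M2 = space M \<times> space M" "y \<in> space M"
  shows "(\<lambda>x. (x, y)) \<in> M \<rightarrow>\<^sub>M M2" and "(\<lambda>x. (y, x)) \<in> M \<rightarrow>\<^sub>M M2"
proof -
  have "{x \<in> space M. indicator C (x, y) = (1::real)} \<in> sets M"
    "{x \<in> space M. indicator C (y, x) = (1::real)} \<in> sets M" if "C \<in> sets M2" for C
    using fubini_prop_indicator(1,2)[OF assms(1) that assms(3)] by (simp_all add: pred_def)
  then show "(\<lambda>x. (x, y)) \<in> M \<rightarrow>\<^sub>M M2" "(\<lambda>x. (y, x)) \<in> M \<rightarrow>\<^sub>M M2"
    using assms(2,3) by (auto intro!: measurableI simp: vimage_def Int_def indicator_eq_1_iff conj_commute)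
qed

lemma integral_indicator_section:
  "(\<integral>x. indicator C (x, y) \<partial>N :: real) = measure N ((\<lambda>x. (x, y)) -` C \<inter> space N)"
  "(\<integral>x. indicator C (y, x) \<partial>N :: real) = measure N ((\<lambda>x. (y, x)) -` C \<inter> space N)"
proof -
  have "(\<lambda>x. indicator C (x, y) :: real) = indicator ((\<lambda>x. (x, y)) -` C)"
    "(\<lambda>x. indicator C (y, x) :: real) = indicator ((\<lambda>x. (y, x)) -` C)"
    by (auto simp: indicator_def)
  then show "(\<integral>x. indicator C (x, y) \<partial>N :: real) = measure N ((\<lambda>x. (x, y)) -` C \<inter> space N)"
    "(\<integral>x. indicator C (y, x) \<partial>N :: real) = measure N ((\<lambda>x. (y, x)) -` C \<inter> space N)"
    by simp_all
qed

lemma (in prob_space) integral_bind_distr: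
  fixes f :: "_ \<Rightarrow> real"
  assumes S: "\<And>h. h \<in> space M \<Longrightarrow> S h \<in> M \<rightarrow>\<^sub>M M2"
    and K: "(\<lambda>h. distr M M2 (S h)) \<in> M \<rightarrow>\<^sub>M subprob_algebra M2"
    and bind: "M \<bind> (\<lambda>h. distr M M2 (S h)) = M2"
    and f: "f \<in> borel_measurable M2" "\<And>z. z \<in> space M2 \<Longrightarrow> \<bar>f z\<bar> \<le> B"
  shows "(\<lambda>h. \<integral>g. f (S h g) \<partial>M) \<in> borel_measurable M"
    and "(\<integral>h. (\<integral>g. f (S h g) \<partial>M) \<partial>M) = (\<integral>z. f z \<partial>M2)"
proof -
  have integral_S: "(\<integral>g. f (S h g) \<partial>M) = integral\<^sup>L (distr M M2 (S h)) f" if "h \<in> space M" for h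
    by (rule integral_distr[OF S[OF that] f(1), symmetric])
  have "(\<lambda>h. integral\<^sup>L (distr M M2 (S h)) f) \<in> borel_measurable M"
    by (rule measurable_compose[OF K integral_measurable_subprob_algebra[OF f(1)]])
  then show "(\<lambda>h. \<integral>g. f (S h g) \<partial>M) \<in> borel_measurable M"
    by (rule measurable_cong[THEN iffD2, rotated]) (simp add: integral_S)
  have "AE h in M. emeasure (distr M M2 (S h)) (space (distr M M2 (S h))) \<le> ennreal 1"
    using prob_space.emeasure_space_1[OF prob_space_distr[OF S]] by (intro AE_I2) simp
  then have "(\<integral>z. f z \<partial>M2) = (\<integral>h. integral\<^sup>L (distr M M2 (S h)) f \<partial>M)"
    by (subst bind[symmetric]) (rule integral_bind[OF f K finite_measure_axioms])
  also have "\<dots> = (\<integral>h. (\<integral>g. f (S h g) \<partial>M) \<partial>M)"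
    by (rule Bochner_Integration.integral_cong) (simp_all add: integral_S)
  finally show "(\<integral>h. (\<integral>g. f (S h g) \<partial>M) \<partial>M) = (\<integral>z. f z \<partial>M2)" ..
qed

locale ultraprod_prob_groups = nat_ultrafilter +
  fixes G :: "nat \<Rightarrow> 'a monoid" and M :: "nat \<Rightarrow> 'a measure" and M2 :: "nat \<Rightarrow> ('a \<times> 'a) measure"
  assumes prob_group_factors: "\<And>n. prob_group (G n) (M n) (M2 n)"

sublocale ultraprod_prob_groups \<subseteq> ultraprod_groups
  using prob_group_factors
  by (intro ultraprod_groups.intro ultraprod_groups_axioms.intro nat_ultrafilter_axioms)
    (simp add: prob_group_def)

context ultraprod_prob_groups
begin

lemma
  shows space_M: "space (M n) = carrier (G n)"
    and space_M2: "space (M2 n) = carrier (G n) \<times> carrier (G n)"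
    and prob_space_M: "prob_space (M n)"
    and prob_space_M2: "prob_space (M2 n)"
    and sets_pair_M: "sets (M n \<Otimes>\<^sub>M M n) \<subseteq> sets (M2 n)"
    and emeasure_pair_M: "A \<in> sets (M n \<Otimes>\<^sub>M M n) \<Longrightarrow> emeasure (M2 n) A = emeasure (M n \<Otimes>\<^sub>M M n) A"
    and measurable_mult_M: "(\<lambda>(x, y). x \<otimes>\<^bsub>G n\<^esub> y) \<in> M2 n \<rightarrow>\<^sub>M M n"
    and meas_pres_lmult_M: "g \<in> carrier (G n) \<Longrightarrow> meas_pres (M n) (M n) (\<lambda>x. g \<otimes>\<^bsub>G n\<^esub> x)"
    and meas_pres_rmult_M: "g \<in> carrier (G n) \<Longrightarrow> meas_pres (M n) (M n) (\<lambda>x. x \<otimes>\<^bsub>G n\<^esub> g)"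
    and meas_pres_inv_M: "meas_pres (M n) (M n) (\<lambda>x. inv\<^bsub>G n\<^esub> x)"
    and fubini_M: "fubini_prop (M n) (M2 n)"
  using prob_group_factors[of n] unfolding prob_group_def by blast+

text \<open>Identifies \<open>U \<times> U\<close> with the ultraproduct of the \<open>G n \<times> G n\<close>.\<close>
definition rep2 :: "(nat \<Rightarrow> 'a) set \<times> (nat \<Rightarrow> 'a) set \<Rightarrow> nat \<Rightarrow> 'a \<times> 'a" where
  "rep2 Z n = (rep (fst Z) n, rep (snd Z) n)"

lemma loeb_space_U: "loeb_space \<alpha> U rep M (internal1 \<alpha> G)"
proof (intro loeb_space.intro loeb_space_axioms.intro nat_ultrafilter_axioms prob_space_M)
  show "internal1 \<alpha> G A = {X \<in> U. eventually (\<lambda>n. rep X n \<in> A n) \<alpha>}" for A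
    unfolding internal1_def using ex_in_class_iff[of _ "\<lambda>n x. x \<in> A n"] by auto
  show "rep X n \<in> space (M n)" if "X \<in> U" for X n
    using rep_in_carrier[OF that] by (simp add: space_M)
  show "\<exists>X\<in>U. eventually (\<lambda>n. rep X n = x n) \<alpha>" if "\<And>n. x n \<in> space (M n)" for x
  proof -
    have "x \<in> useqs G" using that by (simp add: useqs_def space_M)
    then show ?thesis using uclass_in_U rep_uclass by blast
  qed
qed

lemma loeb_space_U2: "loeb_space \<alpha> (U \<times> U) rep2 M2 (internal2 \<alpha> G)"
proof (intro loeb_space.intro loeb_space_axioms.intro nat_ultrafilter_axioms prob_space_M2)
  show "internal2 \<alpha> G C = {Z \<in> U \<times> U. eventually (\<lambda>n. rep2 Z n \<in> C n) \<alpha>}" for C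
  proof (rule Set.set_eqI)
    fix Z :: "(nat \<Rightarrow> 'a) set \<times> (nat \<Rightarrow> 'a) set"
    obtain X Y where Z: "Z = (X, Y)" by (cases Z)
    have "(\<exists>x\<in>X. \<exists>y\<in>Y. eventually (\<lambda>n. (x n, y n) \<in> C n) \<alpha>) \<longleftrightarrow>
        eventually (\<lambda>n. (rep X n, rep Y n) \<in> C n) \<alpha>" if "X \<in> U" "Y \<in> U"
    proof
      assume "\<exists>x\<in>X. \<exists>y\<in>Y. eventually (\<lambda>n. (x n, y n) \<in> C n) \<alpha>"
      then obtain x y where "x \<in> X" "y \<in> Y" "eventually (\<lambda>n. (x n, y n) \<in> C n) \<alpha>" by blast
      from this(3) eventually_eq_in_class[OF that(1) \<open>x \<in> X\<close> rep_in[OF that(1)]]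
        eventually_eq_in_class[OF that(2) \<open>y \<in> Y\<close> rep_in[OF that(2)]]
      show "eventually (\<lambda>n. (rep X n, rep Y n) \<in> C n) \<alpha>" by eventually_elim simp
    qed (use rep_in that in blast)
    then show "Z \<in> internal2 \<alpha> G C \<longleftrightarrow> Z \<in> {Z \<in> U \<times> U. eventually (\<lambda>n. rep2 Z n \<in> C n) \<alpha>}"
      by (auto simp: Z internal2_def rep2_def)
  qed
  show "rep2 Z n \<in> space (M2 n)" if "Z \<in> U \<times> U" for Z n
    using that rep_in_carrier by (auto simp: rep2_def space_M2)
  show "\<exists>Z\<in>U \<times> U. eventually (\<lambda>n. rep2 Z n = z n) \<alpha>" if "\<And>n. z n \<in> space (M2 n)" for z
  proof -
    have z: "(\<lambda>n. fst (z n)) \<in> useqs G" "(\<lambda>n. snd (z n)) \<in> useqs G"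
      using that by (auto simp: useqs_def space_M2 mem_Times_iff)
    have "eventually (\<lambda>n. rep2 (cls (\<lambda>n. fst (z n)), cls (\<lambda>n. snd (z n))) n = z n) \<alpha>"
      using rep_uclass[OF z(1)] rep_uclass[OF z(2)]
      by eventually_elim (simp add: rep2_def prod_eq_iff)
    then show ?thesis using z uclass_in_U by blast
  qed
qed

sublocale L1: loeb_space \<alpha> U rep M "internal1 \<alpha> G"
  by (rule loeb_space_U)

sublocale L2: loeb_space \<alpha> "U \<times> U" rep2 M2 "internal2 \<alpha> G"
  by (rule loeb_space_U2)

lemma ultra_measure_eq: "ultra_measure \<alpha> G M = L1.loeb"
  unfolding ultra_measure_def L1.loeb_def L1.lim_measure_def L1.meas_seqs_def ..

lemma ultra_measure2_eq: "ultra_measure2 \<alpha> G M2 = L2.loeb"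
  unfolding ultra_measure2_def L2.loeb_def L2.lim_measure_def L2.meas_seqs_def ..

lemma loeb_map_U_U:
  assumes "\<And>X. X \<in> U \<Longrightarrow> F X \<in> U" "\<And>n. f n \<in> M n \<rightarrow>\<^sub>M M n"
    and "\<And>X. X \<in> U \<Longrightarrow> eventually (\<lambda>n. rep (F X) n = f n (rep X n)) \<alpha>"
  shows "loeb_map \<alpha> U rep M (internal1 \<alpha> G) U rep M (internal1 \<alpha> G) F f"
  using assms by (intro loeb_map.intro loeb_spaces.intro loeb_space_U loeb_map_axioms.intro)

lemma loeb_map_U2_U:
  assumes "\<And>Z. Z \<in> U \<times> U \<Longrightarrow> F Z \<in> U" "\<And>n. f n \<in> M2 n \<rightarrow>\<^sub>M M n"
    and "\<And>Z. Z \<in> U \<times> U \<Longrightarrow> eventually (\<lambda>n. rep (F Z) n = f n (rep2 Z n)) \<alpha>"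
  shows "loeb_map \<alpha> (U \<times> U) rep2 M2 (internal2 \<alpha> G) U rep M (internal1 \<alpha> G) F f"
  using assms by (intro loeb_map.intro loeb_spaces.intro loeb_space_U loeb_space_U2 loeb_map_axioms.intro)

lemma loeb_map_U_U2:
  assumes "\<And>X. X \<in> U \<Longrightarrow> F X \<in> U \<times> U" "\<And>n. f n \<in> M n \<rightarrow>\<^sub>M M2 n"
    and "\<And>X. X \<in> U \<Longrightarrow> eventually (\<lambda>n. rep2 (F X) n = f n (rep X n)) \<alpha>"
  shows "loeb_map \<alpha> U rep M (internal1 \<alpha> G) (U \<times> U) rep2 M2 (internal2 \<alpha> G) F f"
  using assms by (intro loeb_map.intro loeb_spaces.intro loeb_space_U loeb_space_U2 loeb_map_axioms.intro)

lemma meas_pres_inv_U: "meas_pres L1.loeb L1.loeb (\<lambda>X. inv\<^bsub>UG\<^esub> X)"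
  using meas_pres_inv_M
  by (intro loeb_map.meas_pres_map[OF loeb_map_U_U, where f="\<lambda>n x. inv\<^bsub>G n\<^esub> x"])
    (auto simp: inv_closed rep_inv meas_pres_def)

lemma meas_pres_lmult_U: "X \<in> U \<Longrightarrow> meas_pres L1.loeb L1.loeb (\<lambda>Y. X \<otimes>\<^bsub>UG\<^esub> Y)"
  using meas_pres_lmult_M[OF rep_in_carrier]
  by (intro loeb_map.meas_pres_map[OF loeb_map_U_U, where f="\<lambda>n y. rep X n \<otimes>\<^bsub>G n\<^esub> y"])
    (auto simp: mult_closed rep_mult meas_pres_def)

lemma meas_pres_rmult_U: "X \<in> U \<Longrightarrow> meas_pres L1.loeb L1.loeb (\<lambda>Y. Y \<otimes>\<^bsub>UG\<^esub> X)"
  using meas_pres_rmult_M[OF rep_in_carrier]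
  by (intro loeb_map.meas_pres_map[OF loeb_map_U_U, where f="\<lambda>n y. y \<otimes>\<^bsub>G n\<^esub> rep X n"])
    (auto simp: mult_closed rep_mult meas_pres_def)

lemma measurable_mult_U: "(\<lambda>(X, Y). X \<otimes>\<^bsub>UG\<^esub> Y) \<in> L2.loeb \<rightarrow>\<^sub>M L1.loeb"
  using measurable_mult_M
  by (intro loeb_map.measurable_map[OF loeb_map_U2_U, where f="\<lambda>n (x, y). x \<otimes>\<^bsub>G n\<^esub> y"])
    (auto simp: mult_closed rep_mult rep2_def)

lemma
  shows measurable_fst_M2: "fst \<in> M2 n \<rightarrow>\<^sub>M M n"
    and measurable_snd_M2: "snd \<in> M2 n \<rightarrow>\<^sub>M M n"
proof -
  have "measurable (M n \<Otimes>\<^sub>M M n) (M n) \<subseteq> measurable (M2 n) (M n)"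
    by (rule measurable_mono) (simp_all add: sets_pair_M space_pair_measure space_M space_M2)
  then show "fst \<in> M2 n \<rightarrow>\<^sub>M M n" "snd \<in> M2 n \<rightarrow>\<^sub>M M n"
    using measurable_fst measurable_snd by blast+
qed

lemma measurable_id_pair_U: "(\<lambda>Z. Z) \<in> L2.loeb \<rightarrow>\<^sub>M L1.loeb \<Otimes>\<^sub>M L1.loeb"
proof -
  have "fst \<in> L2.loeb \<rightarrow>\<^sub>M L1.loeb"
    by (rule loeb_map.measurable_map[OF loeb_map_U2_U, where f="\<lambda>n. fst"])
      (simp_all add: mem_Times_iff measurable_fst_M2 rep2_def)
  moreover have "snd \<in> L2.loeb \<rightarrow>\<^sub>M L1.loeb"
    by (rule loeb_map.measurable_map[OF loeb_map_U2_U, where f="\<lambda>n. snd"])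
      (simp_all add: mem_Times_iff measurable_snd_M2 rep2_def)
  ultimately have "(\<lambda>Z. (fst Z, snd Z)) \<in> L2.loeb \<rightarrow>\<^sub>M L1.loeb \<Otimes>\<^sub>M L1.loeb"
    by (rule measurable_Pair)
  then show ?thesis by (simp only: prod.collapse)
qed

lemma sets_pair_U: "sets (L1.loeb \<Otimes>\<^sub>M L1.loeb) \<subseteq> sets L2.loeb"
proof
  fix A assume A: "A \<in> sets (L1.loeb \<Otimes>\<^sub>M L1.loeb)"
  then have "A \<subseteq> space L2.loeb"
    using sets.sets_into_space[OF A] by (simp add: space_pair_measure L1.space_loeb L2.space_loeb)
  then show "A \<in> sets L2.loeb"
    using measurable_sets[OF measurable_id_pair_U A] by (simp add: Int_absorb2)
qed

lemma internal1_times: "internal1 \<alpha> G A \<times> internal1 \<alpha> G B = internal2 \<alpha> G (\<lambda>n. A n \<times> B n)"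
  by (auto simp: L1.mem_internal L2.mem_internal rep2_def eventually_conj_iff)

lemma meas_seqs_Times: "A \<in> L1.meas_seqs \<Longrightarrow> B \<in> L1.meas_seqs \<Longrightarrow> (\<lambda>n. A n \<times> B n) \<in> L2.meas_seqs"
  using sets_pair_M pair_measureI unfolding L1.meas_seqs_def L2.meas_seqs_def by blast

lemma emeasure_pair_loeb_internal:
  assumes "A \<in> L1.meas_seqs" "B \<in> L1.meas_seqs"
  shows "emeasure (L1.loeb \<Otimes>\<^sub>M L1.loeb) (internal1 \<alpha> G A \<times> internal1 \<alpha> G B) =
    L2.lim_measure (\<lambda>n. A n \<times> B n)"
proof -
  interpret L1: prob_space L1.loeb by (rule L1.prob_space_loeb)
  have measure_Times: "measure (M n) (A n) * measure (M n) (B n) = measure (M2 n) (A n \<times> B n)" for n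
  proof -
    interpret Mn: prob_space "M n" by (rule prob_space_M)
    have "emeasure (M2 n) (A n \<times> B n) = emeasure (M n) (A n) * emeasure (M n) (B n)"
      using L1.meas_seqsD[OF assms(1)] L1.meas_seqsD[OF assms(2)]
      by (simp add: emeasure_pair_M Mn.emeasure_pair_measure_Times)
    then show ?thesis by (simp add: measure_def enn2real_mult)
  qed
  have "emeasure (L1.loeb \<Otimes>\<^sub>M L1.loeb) (internal1 \<alpha> G A \<times> internal1 \<alpha> G B) =
      L1.lim_measure A * L1.lim_measure B"
    using assms by (simp add: L1.emeasure_pair_measure_Times L1.internal_in_sets_loeb L1.emeasure_loeb_internal)
  also have "\<dots> = L2.lim_measure (\<lambda>n. A n \<times> B n)"
    unfolding L1.lim_measure_def L2.lim_measure_def measure_Times[symmetric]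
    by (simp add: Lim_mult[OF L1.Bseq_measure L1.Bseq_measure] L1.Lim_measure_nonneg
        ennreal_mult[symmetric] del: ennreal_mult')
  finally show ?thesis .
qed

lemma sets_pair_loeb:
  "sets (L1.loeb \<Otimes>\<^sub>M L1.loeb) = sigma_sets (U \<times> U) {S \<times> T | S T. S \<in> L1.internal_sets \<and> T \<in> L1.internal_sets}"
proof -
  have cover: "\<exists>E\<subseteq>L1.internal_sets. countable E \<and> U = \<Union>E"
    using L1.internal.top by (intro exI[of _ "{U}"]) auto
  have sets_L1: "sets L1.loeb = sets (sigma U L1.internal_sets)"
    by (simp add: L1.sets_loeb L1.internal.space_closed)
  have "sets (L1.loeb \<Otimes>\<^sub>M L1.loeb) = sets (sigma U L1.internal_sets \<Otimes>\<^sub>M sigma U L1.internal_sets)"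
    by (rule sets_pair_measure_cong[OF sets_L1 sets_L1])
  also have "\<dots> = sets (sigma (U \<times> U) {S \<times> T | S T. S \<in> L1.internal_sets \<and> T \<in> L1.internal_sets})"
    by (subst sigma_prod[OF cover L1.internal.space_closed cover L1.internal.space_closed]) rule
  also have "\<dots> = sigma_sets (U \<times> U) {S \<times> T | S T. S \<in> L1.internal_sets \<and> T \<in> L1.internal_sets}"
    by (rule sets_measure_of) (use L1.internal.space_closed in auto)
  finally show ?thesis .
qed

lemma pair_loeb_eq_distr: "L1.loeb \<Otimes>\<^sub>M L1.loeb = distr L2.loeb (L1.loeb \<Otimes>\<^sub>M L1.loeb) (\<lambda>Z. Z)"
proof (rule measure_eqI_generator_eq[OF Int_stable_rectangles[OF L1.internal.Int_stable] _ _ sets_pair_loeb])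
  interpret L11: pair_prob_space L1.loeb L1.loeb
    by (intro pair_prob_space.intro pair_sigma_finite.intro L1.prob_space_loeb
        prob_space_imp_sigma_finite)
  show "{S \<times> T | S T. S \<in> L1.internal_sets \<and> T \<in> L1.internal_sets} \<subseteq> Pow (U \<times> U)"
    using L1.internal.space_closed by auto
  show "sets (distr L2.loeb (L1.loeb \<Otimes>\<^sub>M L1.loeb) (\<lambda>Z. Z)) =
      sigma_sets (U \<times> U) {S \<times> T | S T. S \<in> L1.internal_sets \<and> T \<in> L1.internal_sets}"
    using sets_pair_loeb by simp
  show "range (\<lambda>i. U \<times> U) \<subseteq> {S \<times> T | S T. S \<in> L1.internal_sets \<and> T \<in> L1.internal_sets}"
    using L1.internal.top by auto
  show "emeasure (L1.loeb \<Otimes>\<^sub>M L1.loeb) (U \<times> U) \<noteq> \<infinity>"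
    using L11.emeasure_finite by simp
  fix R assume "R \<in> {S \<times> T | S T. S \<in> L1.internal_sets \<and> T \<in> L1.internal_sets}"
  then obtain A B where AB: "A \<in> L1.meas_seqs" "B \<in> L1.meas_seqs"
    and R: "R = internal1 \<alpha> G A \<times> internal1 \<alpha> G B"
    by (auto elim!: L1.internal_setsE)
  have "R \<in> sets (L1.loeb \<Otimes>\<^sub>M L1.loeb)" "R \<subseteq> space L2.loeb"
    using AB by (auto simp: R L1.internal_in_sets_loeb L2.space_loeb dest: L1.internal_subset[THEN subsetD])
  then have "emeasure (distr L2.loeb (L1.loeb \<Otimes>\<^sub>M L1.loeb) (\<lambda>Z. Z)) R = emeasure L2.loeb R"
    by (simp add: emeasure_distr[OF measurable_id_pair_U] Int_absorb2)
  also have "\<dots> = L2.lim_measure (\<lambda>n. A n \<times> B n)"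
    by (simp add: R internal1_times L2.emeasure_loeb_internal[OF meas_seqs_Times[OF AB]])
  finally show "emeasure (L1.loeb \<Otimes>\<^sub>M L1.loeb) R = emeasure (distr L2.loeb (L1.loeb \<Otimes>\<^sub>M L1.loeb) (\<lambda>Z. Z)) R"
    by (simp add: R emeasure_pair_loeb_internal[OF AB])
qed (simp_all)

lemma emeasure_pair_U:
  assumes "A \<in> sets (L1.loeb \<Otimes>\<^sub>M L1.loeb)"
  shows "emeasure L2.loeb A = emeasure (L1.loeb \<Otimes>\<^sub>M L1.loeb) A"
proof -
  have "A \<subseteq> space L2.loeb"
    using sets.sets_into_space[OF assms] by (simp add: space_pair_measure L1.space_loeb L2.space_loeb)
  then show ?thesis
    using assms by (subst pair_loeb_eq_distr) (simp add: emeasure_distr[OF measurable_id_pair_U] Int_absorb2)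
qed

sublocale L12: loeb_spaces \<alpha> U rep M "internal1 \<alpha> G" "U \<times> U" rep2 M2 "internal2 \<alpha> G"
  by (intro loeb_spaces.intro loeb_space_U loeb_space_U2)

lemma loeb_map_sections:
  shows loeb_map_section_left: "h \<in> U \<Longrightarrow>
      loeb_map \<alpha> U rep M (internal1 \<alpha> G) (U \<times> U) rep2 M2 (internal2 \<alpha> G) (\<lambda>g. (g, h)) (\<lambda>n x. (x, rep h n))"
    and loeb_map_section_right: "g \<in> U \<Longrightarrow>
      loeb_map \<alpha> U rep M (internal1 \<alpha> G) (U \<times> U) rep2 M2 (internal2 \<alpha> G) (\<lambda>h. (g, h)) (\<lambda>n x. (rep g n, x))"
  using fubini_prop_measurable_Pair[OF fubini_M space_M2[unfolded space_M[symmetric]]] rep_in_carrier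
  by (auto intro!: loeb_map_U_U2 simp: rep2_def space_M)

lemma emeasure_distr_section_internal:
  assumes "C \<in> L2.meas_seqs"
  shows "h \<in> U \<Longrightarrow> emeasure (distr L1.loeb L2.loeb (\<lambda>g. (g, h))) (internal2 \<alpha> G C) =
      ennreal (L1.std_part (\<lambda>n y. \<integral>x. indicator (C n) (x, y) \<partial>M n) h)"
    and "g \<in> U \<Longrightarrow> emeasure (distr L1.loeb L2.loeb (\<lambda>h. (g, h))) (internal2 \<alpha> G C) =
      ennreal (L1.std_part (\<lambda>n x. \<integral>y. indicator (C n) (x, y) \<partial>M n) g)"
  using loeb_map.emeasure_distr_internal[OF loeb_map_section_left assms]
    loeb_map.emeasure_distr_internal[OF loeb_map_section_right assms]
  by (simp_all add: L1.lim_measure_def L1.std_part_def integral_indicator_section)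

text \<open>Integrating the sections of \<open>C\<close> over one coordinate gives internal \<open>[0, 1]\<close>-valued
  functions whose integrals are \<open>M2 n (C n)\<close>, by Fubini in the factors; so both section kernels
  disintegrate the Loeb measure on \<open>U \<times> U\<close>.\<close>
lemma section_kernels:
  shows "(\<lambda>h. distr L1.loeb L2.loeb (\<lambda>g. (g, h))) \<in> L1.loeb \<rightarrow>\<^sub>M subprob_algebra L2.loeb"
    and "L1.loeb \<bind> (\<lambda>h. distr L1.loeb L2.loeb (\<lambda>g. (g, h))) = L2.loeb"
    and "(\<lambda>g. distr L1.loeb L2.loeb (\<lambda>h. (g, h))) \<in> L1.loeb \<rightarrow>\<^sub>M subprob_algebra L2.loeb"
    and "L1.loeb \<bind> (\<lambda>g. distr L1.loeb L2.loeb (\<lambda>h. (g, h))) = L2.loeb"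
proof -
  interpret L1_prob: prob_space L1.loeb by (rule L1.prob_space_loeb)
  have sets_C: "C n \<in> sets (M2 n)" if "C \<in> L2.meas_seqs" for C n
    using that by (rule L2.meas_seqsD)
  have unit: "0 \<le> measure (M n) A \<and> measure (M n) A \<le> 1" for n A
    using prob_space.prob_le_1[OF prob_space_M] by simp
  note prob_left = L1_prob.prob_space_distr[OF loeb_map.measurable_map[OF loeb_map_section_left]]
  note prob_right = L1_prob.prob_space_distr[OF loeb_map.measurable_map[OF loeb_map_section_right]]
  show "(\<lambda>h. distr L1.loeb L2.loeb (\<lambda>g. (g, h))) \<in> L1.loeb \<rightarrow>\<^sub>M subprob_algebra L2.loeb"
    "L1.loeb \<bind> (\<lambda>h. distr L1.loeb L2.loeb (\<lambda>g. (g, h))) = L2.loeb"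
    using emeasure_distr_section_internal(1) fubini_prop_indicator(3,5)[OF fubini_M sets_C] prob_left
    by (intro L12.measurable_kernel[where \<phi>="\<lambda>C n y. \<integral>x. indicator (C n) (x, y) \<partial>M n"]
        L12.bind_kernel_eq[where \<phi>="\<lambda>C n y. \<integral>x. indicator (C n) (x, y) \<partial>M n"];
        simp add: integral_indicator_section unit)+
  show "(\<lambda>g. distr L1.loeb L2.loeb (\<lambda>h. (g, h))) \<in> L1.loeb \<rightarrow>\<^sub>M subprob_algebra L2.loeb"
    "L1.loeb \<bind> (\<lambda>g. distr L1.loeb L2.loeb (\<lambda>h. (g, h))) = L2.loeb"
    using emeasure_distr_section_internal(2) fubini_prop_indicator(4,6)[OF fubini_M sets_C] prob_right
    by (intro L12.measurable_kernel[where \<phi>="\<lambda>C n x. \<integral>y. indicator (C n) (x, y) \<partial>M n"]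
        L12.bind_kernel_eq[where \<phi>="\<lambda>C n x. \<integral>y. indicator (C n) (x, y) \<partial>M n"];
        simp add: integral_indicator_section unit)+
qed

lemma fubini_prop_U: "fubini_prop L1.loeb L2.loeb"
  unfolding fubini_prop_def
proof (intro allI impI)
  fix f :: "_ \<Rightarrow> real"
  assume "f \<in> borel_measurable L2.loeb \<and> (\<exists>B. \<forall>z\<in>space L2.loeb. \<bar>f z\<bar> \<le> B)"
  then obtain B where f: "f \<in> borel_measurable L2.loeb" "\<And>z. z \<in> space L2.loeb \<Longrightarrow> \<bar>f z\<bar> \<le> B"
    by blast
  interpret L1_prob: prob_space L1.loeb by (rule L1.prob_space_loeb)
  have left: "(\<lambda>g. (g, h)) \<in> L1.loeb \<rightarrow>\<^sub>M L2.loeb" and right: "(\<lambda>h. (g, h)) \<in> L1.loeb \<rightarrow>\<^sub>M L2.loeb"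
    if "g \<in> space L1.loeb" "h \<in> space L1.loeb" for g h
    using that loeb_map.measurable_map[OF loeb_map_section_left] loeb_map.measurable_map[OF loeb_map_section_right]
    by (simp_all add: L1.space_loeb)
  note left_integral = L1_prob.integral_bind_distr[where S="\<lambda>h g. (g, h)", OF left section_kernels(1,2) f]
  note right_integral = L1_prob.integral_bind_distr[where S="\<lambda>g h. (g, h)", OF right section_kernels(3,4) f]
  have "(\<lambda>h. f (g, h)) \<in> borel_measurable L1.loeb" "(\<lambda>h. f (h, g)) \<in> borel_measurable L1.loeb"
    if "g \<in> space L1.loeb" for g
    using that measurable_compose[OF right f(1)] measurable_compose[OF left f(1)] by blast+
  with left_integral right_integral show "(\<forall>g\<in>space L1.loeb. (\<lambda>h. f (g, h)) \<in> borel_measurable L1.loeb \<and>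
        (\<lambda>h. f (h, g)) \<in> borel_measurable L1.loeb) \<and>
      (\<lambda>g. \<integral>h. f (g, h) \<partial>L1.loeb) \<in> borel_measurable L1.loeb \<and>
      (\<lambda>g. \<integral>h. f (h, g) \<partial>L1.loeb) \<in> borel_measurable L1.loeb \<and>
      (\<integral>h. (\<integral>g. f (g, h) \<partial>L1.loeb) \<partial>L1.loeb) = (\<integral>z. f z \<partial>L2.loeb) \<and>
      (\<integral>g. (\<integral>h. f (g, h) \<partial>L1.loeb) \<partial>L1.loeb) = (\<integral>z. f z \<partial>L2.loeb)"
    by (simp add: L1.space_loeb)
qed

lemma prob_group_U: "prob_group UG L1.loeb L2.loeb"
  unfolding prob_group_def carrier_UG
  using group_UG L1.space_loeb L2.space_loeb L1.prob_space_loeb L2.prob_space_loeb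
    sets_pair_U emeasure_pair_U measurable_mult_U meas_pres_lmult_U meas_pres_rmult_U
    meas_pres_inv_U fubini_prop_U
  by (simp add: meas_pres_def)

end

theorem mainTheorem1:
  fixes \<alpha> :: "nat filter"
    and G :: "nat \<Rightarrow> 'a monoid"
    and M :: "nat \<Rightarrow> 'a measure"
    and M2 :: "nat \<Rightarrow> ('a \<times> 'a) measure"
  assumes "nonprincipal_ultrafilter \<alpha>"
    and "\<And>n. prob_group (G n) (M n) (M2 n)"
  shows "prob_group (ultraprod_group \<alpha> G) (ultra_measure \<alpha> G M) (ultra_measure2 \<alpha> G M2)"
proof -
  interpret ultraprod_prob_groups \<alpha> G M M2
    using assms by (intro ultraprod_prob_groups.intro nat_ultrafilter.intro ultraprod_prob_groups_axioms.intro)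
  show ?thesis
    using prob_group_U by (simp add: ultra_measure_eq ultra_measure2_eq)
qed

end
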